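(* Let $K$ be an algebraically closed field and let $d,n$ be integers with $1<d<n$, $\gcd(n,d)=1$ and $\operatorname{char}(K)\nmid d$. Let $m>n$ be an integer divisible by $d$, and put $\ell:=m/d$. Assume $n-m+\ell\geq 0$. If $\operatorname{char}(K)=0$ or $\operatorname{char}(K)>n$, then $m$ is $(n,d)$-reachable over $K$.
   Context: For a polynomial $f(x)\in K[x]$ of degree $n$ without repeated roots, $\mathcal{C}_{f,d}$ denotes the smooth projective model of the affine curve $y^d=f(x)$; it has a unique point at infinity $O$. $\mathcal{C}_{f,d}$ is identified with its image in its Jacobian $J(\mathcal{C}_{f,d})$ via $Q\mapsto \operatorname{cl}((Q)-(O))$ (linear equivalence class), and a point $Q\in\mathcal{C}_{f,d}(K)$ has order $m$ if $\operatorname{cl}((Q)-(O))$ has order $m$ in $J(\mathcal{C}_{f,d})(K)$. An integer $m>1$ is called $(n,d)$-reachable over $K$ if there exists a monic polynomial $f(x)\in K[x]$ of degree $n$ without repeated roots such that $\mathcal{C}_{f,d}(K)$ contains a point of order $m$. *)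

theory Defs
  imports "HOL-Computational_Algebra.Polynomial"
begin

text \<open>Curve C_{f,d}: affine model y^d = f(x), plus the unique point at infinity O
  (unique since gcd(n,d)=1). A rational function regular outside O is an element of
  the coordinate ring K[x,y]/(y^d - f), uniquely written as sum_{i<d} a_i(x) y^i,
  encoded by hs :: nat => 'a poly (only indices i < d are used).\<close>

definition on_curve :: "'a::field poly \<Rightarrow> nat \<Rightarrow> 'a \<Rightarrow> 'a \<Rightarrow> bool" where
  "on_curve f d a b \<longleftrightarrow> b ^ d = poly f a"

definition eval_fun :: "nat \<Rightarrow> (nat \<Rightarrow> 'a::field poly) \<Rightarrow> 'a \<Rightarrow> 'a \<Rightarrow> 'a" where
  "eval_fun d hs a b = (\<Sum>i<d. poly (hs i) a * b ^ i)"

text \<open>Pole order at O of sum a_i(x) y^i: ord_O(x) = -d, ord_O(y) = -n, and the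
  values d*deg a_i + n*i (i<d) are pairwise distinct since gcd(n,d)=1.\<close>
definition pole_order :: "nat \<Rightarrow> nat \<Rightarrow> (nat \<Rightarrow> 'a::field poly) \<Rightarrow> nat" where
  "pole_order n d hs = Max {d * degree (hs i) + n * i | i. i < d \<and> hs i \<noteq> 0}"

text \<open>k(Q) - k(O) is a principal divisor, Q = (a,b): there is a nonzero function h
  with poles only at O of order k whose only zero is Q (then div h = k(Q) - k(O)).\<close>
definition multiple_principal :: "'a::field poly \<Rightarrow> nat \<Rightarrow> nat \<Rightarrow> 'a \<Rightarrow> 'a \<Rightarrow> bool" where
  "multiple_principal f d k a b \<longleftrightarrow>
     (\<exists>hs. (\<exists>i<d. hs i \<noteq> 0) \<and> pole_order (degree f) d hs = k \<and>
        (\<forall>x y. on_curve f d x y \<and> eval_fun d hs x y = 0 \<longrightarrow> x = a \<and> y = b))"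

text \<open>The affine point Q=(a,b) of C_{f,d} has order m in the Jacobian, i.e.
  cl((Q)-(O)) has order m.\<close>
definition point_has_order :: "'a::field poly \<Rightarrow> nat \<Rightarrow> nat \<Rightarrow> 'a \<Rightarrow> 'a \<Rightarrow> bool" where
  "point_has_order f d m a b \<longleftrightarrow> on_curve f d a b \<and> 0 < m \<and>
     multiple_principal f d m a b \<and> (\<forall>k. 0 < k \<and> k < m \<longrightarrow> \<not> multiple_principal f d k a b)"

definition reachable :: "'a::field itself \<Rightarrow> nat \<Rightarrow> nat \<Rightarrow> nat \<Rightarrow> bool" where
  "reachable _ n d m \<longleftrightarrow> m > 1 \<and>
     (\<exists>f :: 'a poly. lead_coeff f = 1 \<and> degree f = n \<and> rsquarefree f \<and>
        (\<exists>a b. point_has_order f d m a b))"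

end

theory Submission
  imports Defs
begin

lemma infinite_UNIV_alg_closed: "infinite (UNIV :: 'a::alg_closed_field set)"
proof
  assume fin: "finite (UNIV :: 'a set)"
  define P :: "'a poly" where "P = (\<Prod>a\<in>UNIV. [:-a, 1:])"
  have "degree P = card (UNIV :: 'a set)"
    unfolding P_def by (subst degree_prod_sum_eq) auto
  moreover have "card (UNIV :: 'a set) > 0"
    using fin by (simp add: card_gt_0_iff)
  ultimately have "degree (P + 1) > 0"
    by (subst degree_add_eq_left) auto
  then obtain x where "poly (P + 1) x = 0"
    using alg_closed_imp_poly_has_root by blast
  moreover have "poly P x = 0"
    unfolding P_def poly_prod by (rule prod_zero) (use fin in auto)
  ultimately show False by simp
qed

lemma poly_pderiv_eq_0_if_double_root:
  fixes p :: "'a::idom poly"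
  assumes "[:-a, 1:] ^ 2 dvd p"
  shows "poly (pderiv p) a = 0"
proof -
  obtain q where q: "p = [:-a, 1:] ^ 2 * q" using assms by (elim dvdE)
  have "pderiv p = [:-a, 1:] * ([:-a, 1:] * pderiv q + pderiv [:-a, 1:] * q)
      + pderiv [:-a, 1:] * ([:-a, 1:] * q)"
    unfolding q power2_eq_square mult.assoc by (simp only: pderiv_mult) (simp add: algebra_simps)
  then show ?thesis by simp
qed

lemma rsquarefreeI_pderiv:
  fixes p :: "'a::idom poly"
  assumes "p \<noteq> 0" "\<And>a. poly p a = 0 \<Longrightarrow> poly (pderiv p) a \<noteq> 0"
  shows "rsquarefree p"
  unfolding rsquarefree_def
proof (intro conjI allI assms(1))
  fix a
  show "order a p = 0 \<or> order a p = 1"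
  proof (rule ccontr)
    assume "\<not> (order a p = 0 \<or> order a p = 1)"
    then have "[:-a, 1:] ^ 2 dvd p"
      using order_divides by (metis One_nat_def less_2_cases not_less)
    moreover from this have "poly p a = 0"
      by (metis dvd_trans dvd_power poly_eq_0_iff_dvd zero_less_numeral)
    ultimately show False
      using assms(2) poly_pderiv_eq_0_if_double_root by blast
  qed
qed

lemma card_roots_rsquarefree:
  fixes p :: "'a::alg_closed_field poly"
  assumes "rsquarefree p"
  shows "card {x. poly p x = 0} = degree p"
proof -
  have "p \<noteq> 0" using assms by (simp add: rsquarefree_def)
  then obtain A where size: "size A = degree p"
    and p: "p = smult (lead_coeff p) (\<Prod>x\<in>#A. [:-x, 1:])"
    using alg_closed_imp_factorization by blast
  have "poly p x = lead_coeff p * (\<Prod>y\<in>#A. x - y)" for x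
    by (subst p) (simp add: poly_prod_mset)
  then have roots: "{x. poly p x = 0} = set_mset A"
    using \<open>p \<noteq> 0\<close> by auto
  have "count A x = 1" if "x \<in># A" for x
  proof (rule ccontr)
    assume "count A x \<noteq> 1"
    with that have "1 < count A x"
      by (metis count_greater_zero_iff less_one nat_neq_iff)
    then have "x \<in># A - {#x#}"
      by (simp add: in_diff_count)
    then have "A = add_mset x (add_mset x (A - {#x#} - {#x#}))"
      using insert_DiffM[OF that] by (metis insert_DiffM)
    then obtain B where "A = add_mset x (add_mset x B)"
      by blast
    then have "(\<Prod>y\<in>#A. [:-y, 1:]) = [:-x, 1:] ^ 2 * (\<Prod>y\<in>#B. [:-y, 1:])"
      by (simp only: prod_mset.add_mset image_mset_add_mset power2_eq_square mult.assoc)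
    then have "[:-x, 1:] ^ 2 dvd p"
      using p by (metis dvd_smult dvd_triv_left)
    then have "2 \<le> order x p"
      using order_divides \<open>p \<noteq> 0\<close> by blast
    moreover have "order x p = 0 \<or> order x p = 1"
      using assms by (simp add: rsquarefree_def)
    ultimately show False by linarith
  qed
  then have "size A = card (set_mset A)"
    by (simp add: size_multiset_overloaded_eq)
  then show ?thesis using size roots by simp
qed

lemma degree_monom_minus_1: "0 < r \<Longrightarrow> degree (monom 1 r - 1 :: 'a::comm_ring_1 poly) = r"
  unfolding diff_conv_add_uminus by (subst degree_add_eq_left) (simp_all add: degree_monom_eq)

lemma roots_of_unity_eq_roots: "{z::'a::comm_ring_1. z ^ r = 1} = {z. poly (monom 1 r - 1) z = 0}"
  by (simp add: poly_monom)

lemma finite_roots_of_unity: "0 < r \<Longrightarrow> finite {z::'a::idom. z ^ r = 1}"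
  unfolding roots_of_unity_eq_roots
  by (rule poly_roots_finite) (metis degree_0 degree_monom_minus_1 less_irrefl)

lemma card_roots_of_unity_le: "0 < r \<Longrightarrow> card {z::'a::idom. z ^ r = 1} \<le> r"
  unfolding roots_of_unity_eq_roots
  by (metis card_poly_roots_bound degree_0 degree_monom_minus_1 less_irrefl)

lemma card_roots_of_unity:
  assumes "0 < d" "\<not> CHAR('a::alg_closed_field) dvd d"
  shows "card {z::'a. z ^ d = 1} = d"
proof -
  have "of_nat d \<noteq> (0::'a)"
    using assms(2) by (simp add: of_nat_eq_0_iff_char_dvd)
  then have "rsquarefree (monom 1 d - 1 :: 'a poly)"
    using assms(1) degree_monom_minus_1[OF assms(1), where 'a='a]
    by (intro rsquarefreeI_pderiv) (auto simp: pderiv_diff pderiv_monom poly_monom zero_power)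
  then show ?thesis
    unfolding roots_of_unity_eq_roots
    using card_roots_rsquarefree degree_monom_minus_1[OF assms(1)] by metis
qed

lemma map_poly_add_hom:
  assumes "f 0 = 0" "\<And>a b. f (a + b) = f a + f b"
  shows "map_poly f (p + q) = map_poly f p + map_poly f q"
  by (intro poly_eqI) (simp add: coeff_map_poly assms)

lemma map_poly_pcompose_mult:
  fixes A B :: "'a::comm_ring_1 poly poly"
  shows "map_poly (\<lambda>p. p \<circ>\<^sub>p q) (A * B) = map_poly (\<lambda>p. p \<circ>\<^sub>p q) A * map_poly (\<lambda>p. p \<circ>\<^sub>p q) B"
proof (induction A)
  case (pCons a A)
  have hom0: "(\<lambda>p. p \<circ>\<^sub>p q) 0 = 0" by simp
  show ?case
    by (simp add: map_poly_add_hom[where f="\<lambda>p. p \<circ>\<^sub>p q", OF hom0] pcompose_add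
        map_poly_smult[where f="\<lambda>p. p \<circ>\<^sub>p q", OF hom0] pcompose_mult
        map_poly_pCons[where f="\<lambda>p. p \<circ>\<^sub>p q", OF hom0] pCons.IH algebra_simps)
qed simp

text \<open>\<open>weight_subst d n A\<close> is \<open>A(t\<^sup>d, t\<^sup>n)\<close>: its degree is the pole order at infinity
  when \<open>x\<close> and \<open>y\<close> have pole orders \<open>d\<close> and \<open>n\<close>.\<close>
definition weight_subst :: "nat \<Rightarrow> nat \<Rightarrow> 'a::comm_ring_1 poly poly \<Rightarrow> 'a poly" where
  "weight_subst d n A = poly (map_poly (\<lambda>p. p \<circ>\<^sub>p monom 1 d) A) (monom 1 n)"

definition weights :: "nat \<Rightarrow> nat \<Rightarrow> 'a::zero poly poly \<Rightarrow> nat set" where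
  "weights d n A = {d * degree (coeff A i) + n * i | i. coeff A i \<noteq> 0}"

definition weight_le :: "nat \<Rightarrow> nat \<Rightarrow> 'a::zero poly poly \<Rightarrow> nat \<Rightarrow> bool" where
  "weight_le d n A w \<longleftrightarrow> (\<forall>i. coeff A i \<noteq> 0 \<longrightarrow> d * degree (coeff A i) + n * i \<le> w)"

lemma weight_subst_add: "weight_subst d n (A + B) = weight_subst d n A + weight_subst d n B"
  by (simp add: weight_subst_def map_poly_add_hom pcompose_add)

lemma weight_subst_mult: "weight_subst d n (A * B) = weight_subst d n A * weight_subst d n B"
  by (simp add: weight_subst_def map_poly_pcompose_mult)

lemma weight_subst_0: "weight_subst d n 0 = 0"
  by (simp add: weight_subst_def)

lemma weight_subst_1: "weight_subst d n 1 = 1"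
  by (simp add: weight_subst_def pcompose_1)

lemma weight_subst_prod: "weight_subst d n (\<Prod>i\<in>S. F i) = (\<Prod>i\<in>S. weight_subst d n (F i))"
  by (induction S rule: infinite_finite_induct) (simp_all add: weight_subst_1 weight_subst_mult)

lemma weight_subst_sum: "weight_subst d n (\<Sum>i\<in>S. F i) = (\<Sum>i\<in>S. weight_subst d n (F i))"
  by (induction S rule: infinite_finite_induct) (simp_all add: weight_subst_0 weight_subst_add)

lemma weight_subst_monom: "weight_subst d n (monom c i) = (c \<circ>\<^sub>p monom 1 d) * monom 1 (n * i)"
  by (simp add: weight_subst_def map_poly_monom poly_monom monom_power)

lemma degree_weight_subst_monom:
  fixes c :: "'a::idom poly"
  assumes "c \<noteq> 0" "0 < d"
  shows "weight_subst d n (monom c i) \<noteq> 0"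
    and "degree (weight_subst d n (monom c i)) = d * degree c + n * i"
proof -
  have "c \<circ>\<^sub>p monom 1 d \<noteq> 0"
    using assms by (simp add: pcompose_eq_0_iff degree_monom_eq)
  then show "weight_subst d n (monom c i) \<noteq> 0"
    and "degree (weight_subst d n (monom c i)) = d * degree c + n * i"
    using assms by (simp_all add: weight_subst_monom degree_mult_eq degree_pcompose degree_monom_eq)
qed

lemma sum_unique_max_degree:
  fixes g :: "nat \<Rightarrow> 'a::comm_ring_1 poly"
  assumes "finite I" "i0 \<in> I" "g i0 \<noteq> 0"
    and "\<And>i. i \<in> I \<Longrightarrow> i \<noteq> i0 \<Longrightarrow> g i = 0 \<or> degree (g i) < degree (g i0)"
  shows "sum g I \<noteq> 0" and "degree (sum g I) = degree (g i0)"
proof -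
  have split: "sum g I = g i0 + sum g (I - {i0})"
    using assms by (simp add: sum.remove)
  have small: "sum g (I - {i0}) = 0 \<or> degree (sum g (I - {i0})) < degree (g i0)"
  proof (cases "degree (g i0) = 0")
    case True
    then have "sum g (I - {i0}) = 0" using assms(4) by (intro sum.neutral) auto
    then show ?thesis by simp
  next
    case False
    then have "degree (sum g (I - {i0})) < degree (g i0)"
      using assms(4) by (intro degree_sum_less) fastforce+
    then show ?thesis by simp
  qed
  then show "degree (sum g I) = degree (g i0)"
    using split by (auto simp: degree_add_eq_left)
  from small have "coeff (sum g (I - {i0})) (degree (g i0)) = 0"
    using coeff_eq_0 by fastforce
  then have "coeff (sum g I) (degree (g i0)) = lead_coeff (g i0)"
    by (subst split) simp
  then show "sum g I \<noteq> 0"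
    using assms(3) by auto
qed

lemma weight_leD: "weight_le d n A w \<Longrightarrow> coeff A i \<noteq> 0 \<Longrightarrow> d * degree (coeff A i) + n * i \<le> w"
  by (simp add: weight_le_def)

lemma weight_le_1: "weight_le d n (1::'a::comm_semiring_1 poly poly) 0"
  by (auto simp: weight_le_def coeff_1 split: if_splits)

lemma weight_le_mult:
  fixes A B :: "'a::idom poly poly"
  assumes "0 < d" "weight_le d n A a" "weight_le d n B b"
  shows "weight_le d n (A * B) (a + b)"
  unfolding weight_le_def
proof (intro allI impI)
  fix i assume nz: "coeff (A * B) i \<noteq> 0"
  have c: "coeff (A * B) i = (\<Sum>j\<le>i. coeff A j * coeff B (i - j))" by (rule coeff_mult)
  have term_bound: "d * (degree (coeff A j) + degree (coeff B (i - j))) + n * i \<le> a + b"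
    if "j \<le> i" "coeff A j * coeff B (i - j) \<noteq> 0" for j
  proof -
    have "d * degree (coeff A j) + n * j \<le> a" "d * degree (coeff B (i - j)) + n * (i - j) \<le> b"
      using assms(2,3) that(2) unfolding weight_le_def by auto
    moreover have "n * j + n * (i - j) = n * i"
      using that(1) by (simp add: add_mult_distrib2[symmetric])
    ultimately show ?thesis by (simp add: add_mult_distrib2)
  qed
  obtain j0 where "j0 \<le> i" "coeff A j0 * coeff B (i - j0) \<noteq> 0"
    using nz unfolding c by (metis (no_types, lifting) atMost_iff sum.neutral)
  then have ni: "n * i \<le> a + b" using term_bound by fastforce
  define D where "D = (a + b - n * i) div d"
  have "degree (coeff (A * B) i) \<le> D"
    unfolding c
  proof (intro degree_sum_le)
    fix j assume "j \<in> {..i}"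
    then have "d * (degree (coeff A j) + degree (coeff B (i - j))) \<le> a + b - n * i"
      if "coeff A j * coeff B (i - j) \<noteq> 0"
      using term_bound that by fastforce
    then have "degree (coeff A j) + degree (coeff B (i - j)) \<le> D"
      if "coeff A j * coeff B (i - j) \<noteq> 0"
      using that assms(1) unfolding D_def by (metis div_le_mono nonzero_mult_div_cancel_left not_gr0)
    then show "degree (coeff A j * coeff B (i - j)) \<le> D"
      by (metis degree_0 degree_mult_le le0 order_trans)
  qed simp
  then have "d * degree (coeff (A * B) i) \<le> a + b - n * i"
    unfolding D_def by (meson dual_order.trans mult_le_mono2 times_div_less_eq_dividend)
  then show "d * degree (coeff (A * B) i) + n * i \<le> a + b" using ni by linarith
qed

lemma weight_le_prod:
  fixes F :: "'b \<Rightarrow> 'a::idom poly poly"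
  assumes "0 < d" "\<And>u. u \<in> S \<Longrightarrow> weight_le d n (F u) w"
  shows "weight_le d n (\<Prod>u\<in>S. F u) (card S * w)"
  using assms(2)
proof (induction S rule: infinite_finite_induct)
  case (insert x S)
  then show ?case
    using weight_le_mult[OF assms(1), of n "F x" w "prod F S" "card S * w"] by simp
qed (simp_all add: weight_le_1)

lemma weights_inj:
  fixes a b i j :: nat
  assumes "coprime n d" "i < d" "j < d" "d * a + n * i = d * b + n * j"
  shows "i = j"
proof -
  have "False" if "coprime n d" "i < j" "j < d" "d * a + n * i = d * b + n * j" for a b i j :: nat
  proof -
    have "d * a = d * b + n * (j - i)"
      using that(2,4) by (simp add: diff_mult_distrib2)
    then have "d dvd n * (j - i)"
      by (metis dvd_add_right_iff dvd_triv_left)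
    then have "d dvd j - i"
      using that(1) by (simp add: coprime_commute coprime_dvd_mult_right_iff)
    then show False
      using that(2,3) by (simp add: nat_dvd_not_less)
  qed
  then show ?thesis
    using assms by (metis linorder_neqE_nat)
qed

lemma finite_weights: "finite (weights d n A)"
proof -
  have "weights d n A \<subseteq> (\<lambda>i. d * degree (coeff A i) + n * i) ` {..degree A}"
    unfolding weights_def using le_degree by fastforce
  then show ?thesis using finite_subset by blast
qed

lemma weight_le_Max_weights: "weight_le d n A (Max (weights d n A))"
  unfolding weight_le_def using finite_weights by (auto simp: weights_def intro!: Max_ge)

text \<open>Coprimality makes the weights of the monomials \<open>y\<^sup>i\<close>, \<open>i < d\<close>, pairwise distinct,
  so no cancellation happens in the top degree.\<close>
lemma weight_subst_nonzero_degree: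
  fixes A :: "'a::idom poly poly"
  assumes "0 < d" "coprime n d" "degree A < d" "A \<noteq> 0"
  shows "weight_subst d n A \<noteq> 0" and "degree (weight_subst d n A) = Max (weights d n A)"
proof -
  have ne: "weights d n A \<noteq> {}"
    using assms(4) unfolding weights_def by (metis (mono_tags, lifting) empty_Collect_eq leading_coeff_0_iff)
  obtain i0 where i0: "coeff A i0 \<noteq> 0" "d * degree (coeff A i0) + n * i0 = Max (weights d n A)"
    using Max_in[OF finite_weights ne] unfolding weights_def by auto
  have less: "d * degree (coeff A i) + n * i < Max (weights d n A)"
    if "coeff A i \<noteq> 0" "i \<noteq> i0" for i
  proof -
    have "i < d" "i0 < d" using that(1) i0(1) assms(3) le_degree by (meson le_less_trans)+
    then have "d * degree (coeff A i) + n * i \<noteq> d * degree (coeff A i0) + n * i0"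
      using weights_inj[OF assms(2)] that(2) by blast
    then show ?thesis
      using weight_le_Max_weights[of d n A] that(1) i0(2) unfolding weight_le_def
      by (metis le_neq_implies_less)
  qed
  let ?g = "\<lambda>i. weight_subst d n (monom (coeff A i) i)"
  have expand: "weight_subst d n A = (\<Sum>i\<le>degree A. ?g i)"
    by (subst poly_as_sum_of_monoms[symmetric]) (simp add: weight_subst_sum)
  have "?g i = 0 \<or> degree (?g i) < degree (?g i0)" if "i \<noteq> i0" for i
  proof (cases "coeff A i = 0")
    case False
    then show ?thesis
      using less[OF False that] i0 by (simp add: degree_weight_subst_monom(2)[OF _ assms(1)])
  qed (simp add: weight_subst_0)
  moreover have "i0 \<in> {..degree A}" "?g i0 \<noteq> 0"
    using i0(1) le_degree degree_weight_subst_monom(1)[OF i0(1) assms(1)] by auto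
  ultimately show "weight_subst d n A \<noteq> 0" "degree (weight_subst d n A) = Max (weights d n A)"
    unfolding expand using sum_unique_max_degree[of "{..degree A}" i0 ?g]
      degree_weight_subst_monom(2)[OF i0(1) assms(1)] i0(2) by auto
qed

definition fun_poly :: "nat \<Rightarrow> (nat \<Rightarrow> 'a::comm_ring_1 poly) \<Rightarrow> 'a poly poly" where
  "fun_poly d hs = (\<Sum>i<d. monom (hs i) i)"

lemma coeff_fun_poly: "coeff (fun_poly d hs) i = (if i < d then hs i else 0)"
  by (simp add: fun_poly_def coeff_sum coeff_monom)

lemma degree_fun_poly_less: "0 < d \<Longrightarrow> degree (fun_poly d hs) < d"
  by (metis coeff_fun_poly degree_0 leading_coeff_0_iff not_less)

lemma fun_poly_nonzero: "\<exists>i<d. hs i \<noteq> 0 \<Longrightarrow> fun_poly d hs \<noteq> 0"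
  by (metis coeff_fun_poly coeff_0)

lemma poly_fun_poly: "poly (fun_poly d hs) V = (\<Sum>i<d. hs i * V ^ i)"
  by (simp add: fun_poly_def poly_sum poly_monom)

lemma poly_fun_poly_const: "poly (poly (fun_poly d hs) [:y:]) x = eval_fun d hs x y"
  by (simp add: fun_poly_def eval_fun_def poly_sum poly_monom poly_const_pow mult.commute)

lemma pole_order_eq_Max_weights: "pole_order n d hs = Max (weights d n (fun_poly d hs))"
proof -
  have "weights d n (fun_poly d hs) = {d * degree (hs i) + n * i | i. i < d \<and> hs i \<noteq> 0}"
    unfolding weights_def coeff_fun_poly by (auto split: if_splits)
  then show ?thesis unfolding pole_order_def by simp
qed

lemma weight_le_pole_order: "weight_le d n (fun_poly d hs) (pole_order n d hs)"
  unfolding pole_order_eq_Max_weights by (rule weight_le_Max_weights)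

lemma weight_subst_fun_poly:
  fixes hs :: "nat \<Rightarrow> 'a::field poly"
  assumes "0 < d" "coprime n d" "\<exists>i<d. hs i \<noteq> 0"
  shows "weight_subst d n (fun_poly d hs) \<noteq> 0"
    and "degree (weight_subst d n (fun_poly d hs)) = pole_order n d hs"
  unfolding pole_order_eq_Max_weights
  using weight_subst_nonzero_degree[OF assms(1,2) degree_fun_poly_less fun_poly_nonzero] assms
  by auto

lemma dvd_power_diff: "x - y dvd x ^ t - y ^ t" for x y :: "'a::comm_ring_1"
proof (cases t)
  case (Suc s)
  then show ?thesis by (simp only: diff_power_eq_sum) simp
qed simp

lemma dvd_if_roots_of_unity_power_eq_1:
  assumes "0 < d" "\<not> CHAR('a::alg_closed_field) dvd d"
    and roots: "\<And>z::'a. z ^ d = 1 \<Longrightarrow> z ^ i = 1"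
  shows "d dvd i"
proof (rule ccontr)
  assume "\<not> d dvd i"
  then have r: "0 < i mod d" "i mod d < d"
    using assms(1) by (auto simp: dvd_eq_mod_eq_0)
  have "{z::'a. z ^ d = 1} \<subseteq> {z. z ^ (i mod d) = 1}"
  proof safe
    fix z :: 'a assume "z ^ d = 1"
    then show "z ^ (i mod d) = 1"
      using roots[of z] by (metis div_mult_mod_eq power_add power_mult power_one mult.commute mult_1)
  qed
  then have "card {z::'a. z ^ d = 1} \<le> card {z::'a. z ^ (i mod d) = 1}"
    using finite_roots_of_unity[OF r(1)] by (rule card_mono[rotated])
  also have "\<dots> \<le> i mod d"
    using card_roots_of_unity_le[OF r(1)] .
  finally show False
    using card_roots_of_unity[OF assms(1,2)] r(2) by simp
qed

definition norm_poly :: "nat \<Rightarrow> (nat \<Rightarrow> 'a::field poly) \<Rightarrow> 'a poly poly" where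
  "norm_poly d hs = (\<Prod>u | u ^ d = 1. fun_poly d hs \<circ>\<^sub>p [:0, [:u:]:])"

lemma fun_poly_pcompose_scale:
  "fun_poly d hs \<circ>\<^sub>p [:0, [:u:]:] = fun_poly d (\<lambda>i. smult (u ^ i) (hs i))"
  by (rule poly_eqI) (simp add: coeff_pcompose_linear coeff_fun_poly poly_const_pow)

lemma pole_order_scale:
  "u \<noteq> 0 \<Longrightarrow> pole_order n d (\<lambda>i. smult (u ^ i) (hs i)) = pole_order n d hs"
  by (simp add: pole_order_def)

lemma poly_norm_poly_const:
  "poly (poly (norm_poly d hs) [:y:]) x = (\<Prod>u | u ^ d = 1. eval_fun d hs x (u * y))"
  by (simp add: norm_poly_def poly_prod poly_pcompose poly_fun_poly_const)

lemma norm_poly_pcompose_root_of_unity: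
  assumes "0 < d" "z ^ d = 1"
  shows "norm_poly d hs \<circ>\<^sub>p [:0, [:z:]:] = norm_poly d hs"
proof -
  have z: "z \<noteq> 0"
    using assms by (metis power_eq_0_iff zero_neq_one)
  have "bij_betw (\<lambda>u. u * z) {u. u ^ d = 1} {u. u ^ d = 1}"
  proof (rule bij_betw_byWitness[where f' = "\<lambda>u. u / z"])
    show "(\<lambda>u. u * z) ` {u. u ^ d = 1} \<subseteq> {u. u ^ d = 1}"
      using assms(2) by (auto simp: power_mult_distrib)
    show "(\<lambda>u. u / z) ` {u. u ^ d = 1} \<subseteq> {u. u ^ d = 1}"
      using assms(2) by (auto simp: power_divide)
  qed (use z in simp_all)
  then have "(\<Prod>u | u ^ d = 1. fun_poly d hs \<circ>\<^sub>p [:0, [:u * z:]:]) = norm_poly d hs"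
    unfolding norm_poly_def by (rule prod.reindex_bij_betw)
  moreover have "[:0, [:u:]:] \<circ>\<^sub>p [:0, [:z:]:] = [:0, [:u * z:]:]" for u :: 'a
    by (simp add: pcompose_pCons)
  ultimately show ?thesis
    unfolding norm_poly_def pcompose_prod by (simp add: pcompose_assoc[symmetric])
qed

text \<open>Invariance under \<open>y \<mapsto> z y\<close> for all \<open>d\<close>-th roots of unity \<open>z\<close>: the norm is a polynomial
  in \<open>y\<^sup>d\<close>.\<close>
lemma coeff_norm_poly_eq_0:
  assumes "0 < d" "\<not> CHAR('a::alg_closed_field) dvd d" "\<not> d dvd i"
  shows "coeff (norm_poly d (hs :: nat \<Rightarrow> 'a poly)) i = 0"
proof (rule ccontr)
  assume nz: "coeff (norm_poly d hs) i \<noteq> 0"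
  have "z ^ i = 1" if "z ^ d = 1" for z :: 'a
  proof -
    have "coeff (norm_poly d hs) i = coeff (norm_poly d hs \<circ>\<^sub>p [:0, [:z:]:]) i"
      using norm_poly_pcompose_root_of_unity[OF assms(1) that] by simp
    also have "\<dots> = smult (z ^ i) (coeff (norm_poly d hs) i)"
      by (simp add: coeff_pcompose_linear poly_const_pow)
    finally have "coeff (norm_poly d hs) i = smult (z ^ i) (coeff (norm_poly d hs) i)" .
    then have "smult (z ^ i - 1) (coeff (norm_poly d hs) i) = 0"
      by (simp add: smult_diff_left)
    then show ?thesis using nz by simp
  qed
  then show False
    using dvd_if_roots_of_unity_power_eq_1[OF assms(1,2)] assms(3) by blast
qed

lemma norm_poly_weights:
  fixes hs :: "nat \<Rightarrow> 'a::alg_closed_field poly"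
  assumes "0 < d" "coprime n d" "\<not> CHAR('a) dvd d" "\<exists>i<d. hs i \<noteq> 0"
  shows "weight_le d n (norm_poly d hs) (d * pole_order n d hs)"
    and "degree (weight_subst d n (norm_poly d hs)) = d * pole_order n d hs"
proof -
  let ?U = "{u::'a. u ^ d = 1}"
  have scaled: "u \<noteq> 0" "\<exists>i<d. smult (u ^ i) (hs i) \<noteq> 0" if "u \<in> ?U" for u
  proof -
    show "u \<noteq> 0"
      using that assms(1) by (auto simp: zero_power)
    then show "\<exists>i<d. smult (u ^ i) (hs i) \<noteq> 0"
      using assms(4) by simp
  qed
  have norm: "norm_poly d hs = (\<Prod>u\<in>?U. fun_poly d (\<lambda>i. smult (u ^ i) (hs i)))"
    unfolding norm_poly_def fun_poly_pcompose_scale ..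
  have "weight_le d n (fun_poly d (\<lambda>i. smult (u ^ i) (hs i))) (pole_order n d hs)"
    if "u \<in> ?U" for u
    using weight_le_pole_order[of d n] pole_order_scale[OF scaled(1)[OF that]] by metis
  then have "weight_le d n (norm_poly d hs) (card ?U * pole_order n d hs)"
    unfolding norm by (rule weight_le_prod[OF assms(1)])
  then show "weight_le d n (norm_poly d hs) (d * pole_order n d hs)"
    by (simp only: card_roots_of_unity[OF assms(1,3)])
  have "degree (weight_subst d n (norm_poly d hs))
      = (\<Sum>u\<in>?U. degree (weight_subst d n (fun_poly d (\<lambda>i. smult (u ^ i) (hs i)))))"
    unfolding norm weight_subst_prod
    using weight_subst_fun_poly(1)[OF assms(1,2) scaled(2)] by (intro degree_prod_sum_eq) auto
  also have "\<dots> = (\<Sum>u\<in>?U. pole_order n d hs)"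
    using weight_subst_fun_poly(2)[OF assms(1,2) scaled(2)] pole_order_scale[OF scaled(1)]
    by (intro sum.cong) simp_all
  finally show "degree (weight_subst d n (norm_poly d hs)) = d * pole_order n d hs"
    using card_roots_of_unity[OF assms(1,3)] by simp
qed

lemma poly_eq_sum_coeff_multiples:
  fixes A :: "'b::comm_semiring_1 poly"
  assumes "\<And>i. \<not> d dvd i \<Longrightarrow> coeff A i = 0" "0 < d" "degree A \<le> D"
  shows "poly A y = (\<Sum>t\<le>D. coeff A (d * t) * (y ^ d) ^ t)"
proof -
  define g where "g i = coeff A i * y ^ i" for i
  have "poly A y = (\<Sum>i\<le>D. g i)"
    unfolding g_def poly_altdef
    by (rule sum.mono_neutral_left) (auto simp: coeff_eq_0 assms(3))
  also have "\<dots> = (\<Sum>i\<in>(\<lambda>t. d * t) ` {..D}. g i)"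
  proof (rule sum.mono_neutral_cong)
    show "g i = 0" if "i \<in> (\<lambda>t. d * t) ` {..D} - {..D}" for i
      using that assms(3) by (auto simp: g_def coeff_eq_0)
    show "g i = 0" if i: "i \<in> {..D} - (\<lambda>t. d * t) ` {..D}" for i
    proof (cases "d dvd i")
      case True
      then obtain t where t: "i = d * t" by (elim dvdE)
      have "t \<le> d * t" "d * t \<le> D" using assms(2) i t by simp_all
      then have "t \<le> D" by linarith
      then show ?thesis using i t by auto
    qed (simp add: g_def assms(1))
  qed auto
  also have "\<dots> = (\<Sum>t\<le>D. g (d * t))"
    using assms(2) by (subst sum.reindex) (auto simp: inj_on_def)
  finally show ?thesis by (simp add: g_def power_mult)
qed

text \<open>The norm of the function as a polynomial in \<open>x\<close>: \<open>norm_poly\<close> is a polynomial in \<open>y\<^sup>d\<close>,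
  into which \<open>f\<close> is substituted for \<open>y\<^sup>d\<close>.\<close>
definition curve_norm :: "'a poly \<Rightarrow> nat \<Rightarrow> (nat \<Rightarrow> 'a::field poly) \<Rightarrow> 'a poly" where
  "curve_norm f d hs = (\<Sum>t\<le>degree (norm_poly d hs). coeff (norm_poly d hs) (d * t) * f ^ t)"

lemma poly_norm_poly_eq_sum:
  assumes "0 < d" "\<not> CHAR('a::alg_closed_field) dvd d"
  shows "poly (norm_poly d (hs :: nat \<Rightarrow> 'a poly)) V
    = (\<Sum>t\<le>degree (norm_poly d hs). coeff (norm_poly d hs) (d * t) * (V ^ d) ^ t)"
  using coeff_norm_poly_eq_0[OF assms] assms(1) by (intro poly_eq_sum_coeff_multiples) auto

lemma poly_curve_norm:
  fixes f :: "'a::alg_closed_field poly"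
  assumes "0 < d" "\<not> CHAR('a::alg_closed_field) dvd d" "y ^ d = poly f x"
  shows "poly (curve_norm f d hs) x = (\<Prod>u | u ^ d = 1. eval_fun d hs x (u * y))"
proof -
  have "poly (norm_poly d hs) [:y:]
      = (\<Sum>t\<le>degree (norm_poly d hs). coeff (norm_poly d hs) (d * t) * ([:y:] ^ d) ^ t)"
    by (rule poly_norm_poly_eq_sum[OF assms(1,2)])
  then have "poly (poly (norm_poly d hs) [:y:]) x = poly (curve_norm f d hs) x"
    by (simp add: curve_norm_def poly_sum poly_const_pow assms(3) mult.commute)
  then show ?thesis
    by (simp add: poly_norm_poly_const)
qed

lemma curve_norm_congruence:
  assumes "0 < d" "\<not> CHAR('a::alg_closed_field) dvd d"
  shows "V ^ d - f dvd poly (norm_poly d hs) V - curve_norm f d (hs :: nat \<Rightarrow> 'a poly)"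
  unfolding poly_norm_poly_eq_sum[OF assms] curve_norm_def sum_subtractf[symmetric]
    right_diff_distrib[symmetric]
  by (intro dvd_sum dvd_mult dvd_power_diff)

lemma pcompose_power: "(p ^ t) \<circ>\<^sub>p q = (p \<circ>\<^sub>p q) ^ t"
  for p q :: "'a::comm_ring_1 poly"
  by (induction t) (simp_all add: pcompose_1 pcompose_mult)

lemma degree_diff_less_same_lead:
  fixes p q :: "'a::ab_group_add poly"
  assumes "degree p = degree q" "lead_coeff p = lead_coeff q" "p \<noteq> q"
  shows "degree (p - q) < degree q"
proof -
  have "degree (p - q) \<le> degree q"
    using assms(1) by (simp add: degree_diff_le)
  moreover have "coeff (p - q) (degree q) = 0"
    using assms(1,2) by simp
  moreover have "p - q \<noteq> 0"
    using assms(3) by simp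
  ultimately show ?thesis
    by (metis le_neq_implies_less leading_coeff_0_iff)
qed

lemma degree_sum_mult_power_diff_less:
  fixes c :: "nat \<Rightarrow> 'a::idom poly" and F G :: "'a poly"
  assumes "degree F = degree G" "lead_coeff F = lead_coeff G" "0 < W"
    and "\<And>t. t \<in> T \<Longrightarrow> c t \<noteq> 0 \<Longrightarrow> degree (c t) + degree G * t \<le> W"
  shows "degree (\<Sum>t\<in>T. c t * (F ^ t - G ^ t)) < W"
proof (rule degree_sum_less[OF _ assms(3)])
  fix t assume t: "t \<in> T"
  show "degree (c t * (F ^ t - G ^ t)) < W"
  proof (cases "c t = 0 \<or> F ^ t = G ^ t")
    case False
    then have "G \<noteq> 0" "F \<noteq> 0"
      using assms(2) by auto
    moreover have "lead_coeff (F ^ t) = lead_coeff (G ^ t)"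
      by (simp only: lead_coeff_power assms(2))
    ultimately have "degree (F ^ t - G ^ t) < degree (G ^ t)"
      using False assms(1) by (intro degree_diff_less_same_lead) (simp_all add: degree_power_eq)
    then have "degree (c t * (F ^ t - G ^ t)) < degree (c t) + degree G * t"
      using degree_mult_le[of "c t" "F ^ t - G ^ t"] \<open>G \<noteq> 0\<close> by (simp add: degree_power_eq mult.commute)
    then show ?thesis
      using assms(4)[OF t] False by linarith
  qed (use assms(3) in auto)
qed

text \<open>Substituting \<open>x\<^sup>d\<close> turns the norm into \<open>N(x\<^sup>d, f(x\<^sup>d))\<close>, which has the same leading term as
  the weighted substitution \<open>N(x\<^sup>d, x\<^sup>n\<^sup>d)\<close> because \<open>f\<close> is monic of degree \<open>n\<close>.\<close>
lemma degree_curve_norm: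
  fixes f :: "'a::alg_closed_field poly"
  assumes "0 < d" "coprime n d" "\<not> CHAR('a) dvd d" "lead_coeff f = 1" "degree f = n"
    and "\<exists>i<d. hs i \<noteq> 0" "0 < pole_order n d hs"
  shows "degree (curve_norm f d hs) = pole_order n d hs"
proof -
  define N where "N = norm_poly d hs"
  define X where "X = (monom 1 d :: 'a poly)"
  define c where "c t = coeff N (d * t) \<circ>\<^sub>p X" for t
  define W where "W = d * pole_order n d hs"
  have W: "0 < W" using assms(1,7) by (simp add: W_def)
  have "weight_subst d n N
      = (\<Sum>t\<le>degree N. coeff (map_poly (\<lambda>p. p \<circ>\<^sub>p X) N) (d * t) * (monom 1 n ^ d) ^ t)"
    unfolding weight_subst_def X_def N_def
    using coeff_norm_poly_eq_0[OF assms(1,3)] assms(1)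
    by (intro poly_eq_sum_coeff_multiples) (simp_all add: coeff_map_poly map_poly_degree_leq)
  then have subst: "weight_subst d n N = (\<Sum>t\<le>degree N. c t * monom 1 (n * d) ^ t)"
    by (simp add: c_def coeff_map_poly monom_power mult.commute)
  have comp: "curve_norm f d hs \<circ>\<^sub>p X = (\<Sum>t\<le>degree N. c t * (f \<circ>\<^sub>p X) ^ t)"
    by (simp add: curve_norm_def N_def c_def pcompose_sum pcompose_mult pcompose_power)
  have "degree (curve_norm f d hs \<circ>\<^sub>p X - weight_subst d n N) < W"
    unfolding comp subst sum_subtractf[symmetric] right_diff_distrib[symmetric]
  proof (rule degree_sum_mult_power_diff_less[OF _ _ W])
    show "degree (f \<circ>\<^sub>p X) = degree (monom 1 (n * d) :: 'a poly)"
      using assms(5) by (simp add: X_def degree_pcompose degree_monom_eq)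
    show "lead_coeff (f \<circ>\<^sub>p X) = lead_coeff (monom 1 (n * d) :: 'a poly)"
      using assms(1,4) by (simp add: X_def lead_coeff_comp degree_monom_eq)
    fix t assume "t \<in> {..degree N}" "c t \<noteq> 0"
    then have "coeff N (d * t) \<noteq> 0" by (auto simp: c_def)
    then have "d * degree (coeff N (d * t)) + n * (d * t) \<le> W"
      using norm_poly_weights(1)[OF assms(1,2,3,6)] unfolding W_def N_def weight_le_def by blast
    then show "degree (c t) + degree (monom 1 (n * d) :: 'a poly) * t \<le> W"
      by (simp add: c_def X_def degree_pcompose degree_monom_eq algebra_simps)
  qed
  moreover have "degree (weight_subst d n N) = W"
    using norm_poly_weights(2)[OF assms(1,2,3,6)] by (simp add: W_def N_def)
  ultimately have "degree (curve_norm f d hs \<circ>\<^sub>p X) = W"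
    by (metis degree_add_eq_right diff_add_cancel)
  then show ?thesis
    using assms(1) by (simp add: X_def W_def degree_pcompose degree_monom_eq)
qed

lemma X_power_degree_dvd_if_roots_zero:
  fixes p :: "'a::alg_closed_field poly"
  assumes "\<And>x. poly p x = 0 \<Longrightarrow> x = 0"
  shows "[:0, 1:] ^ degree p dvd p"
proof (cases "p = 0")
  case False
  define r where "r = order 0 p"
  obtain q where q: "p = [:- 0, 1:] ^ r * q" and not_dvd: "\<not> [:- 0, 1:] dvd q"
    using order_decomp[OF False, of 0] unfolding r_def by blast
  have "degree q = 0"
  proof (rule ccontr)
    assume "degree q \<noteq> 0"
    then obtain x where x: "poly q x = 0"
      using alg_closed_imp_poly_has_root by blast
    then have "poly p x = 0"
      unfolding q by simp
    then have "x = 0"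
      by (rule assms)
    then show False
      using x not_dvd by (simp add: poly_eq_0_iff_dvd)
  qed
  moreover have "q \<noteq> 0"
    using False q by auto
  ultimately have "degree p = r"
    unfolding q by (simp add: degree_mult_eq degree_linear_power)
  then show ?thesis
    unfolding q by simp
qed simp

lemma linear_power_dvd_mult_cancel:
  fixes p q :: "'a::idom poly"
  assumes "[:-a, 1:] ^ k dvd p * q" "poly q a \<noteq> 0"
  shows "[:-a, 1:] ^ k dvd p"
proof (cases "p = 0")
  case False
  have "q \<noteq> 0" using assms(2) by auto
  then have "k \<le> order a (p * q)"
    using assms(1) False by (simp add: order_divides)
  also have "\<dots> = order a p"
    using False \<open>q \<noteq> 0\<close> order_0I[OF assms(2)] by (simp add: order_mult)
  finally show ?thesis
    by (simp add: order_divides)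
qed simp

lemma poly_poly_eq_poly_poly_const: "poly (poly A g) x = poly (poly A [:poly g x:]) x"
  by (induction A) auto

lemma norm_poly_eq_mult:
  assumes "0 < d"
  shows "norm_poly d hs
    = fun_poly d hs * (\<Prod>u\<in>{u. u ^ d = 1} - {1}. fun_poly d hs \<circ>\<^sub>p [:0, [:u:]:])"
proof -
  have "norm_poly d hs = (fun_poly d hs \<circ>\<^sub>p [:0, [:1:]:])
      * (\<Prod>u\<in>{u. u ^ d = 1} - {1}. fun_poly d hs \<circ>\<^sub>p [:0, [:u:]:])"
    unfolding norm_poly_def by (rule prod.remove[OF finite_roots_of_unity[OF assms]]) simp
  moreover have "[:0, [:1:]:] = [:0, 1::'a poly:]"
    by (simp add: one_pCons)
  ultimately show ?thesis by simp
qed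

lemma poly_0_eq_if_X_power_dvd_diff:
  fixes p q :: "'a::comm_ring_1 poly"
  assumes "[:0, 1:] ^ k dvd p - q" "0 < k"
  shows "poly p 0 = poly q 0"
proof -
  have "[:- 0, 1:] dvd p - q"
    using dvd_trans[OF dvd_power[of k "[:0, 1:]"] assms(1)] assms(2) by simp
  then show ?thesis
    by (simp only: poly_eq_0_iff_dvd[symmetric]) simp
qed

text \<open>The norm of \<open>h\<close> vanishes only at \<open>x = 0\<close> and has degree \<open>k\<close>, hence is divisible by \<open>x\<^sup>k\<close>;
  all conjugates \<open>h(x, u y)\<close> with \<open>u \<noteq> 1\<close> are units at \<open>(0, b)\<close>, so \<open>h\<close> itself vanishes to order
  \<open>k\<close> along the branch \<open>y = V(x)\<close>.\<close>
lemma X_power_dvd_poly_fun_poly: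
  fixes f V :: "'a::alg_closed_field poly"
  assumes "0 < d" "coprime n d" "\<not> CHAR('a) dvd d" "lead_coeff f = 1" "degree f = n"
    and "b \<noteq> 0" "poly V 0 = b" "[:0, 1:] ^ k dvd V ^ d - f"
    and "\<exists>i<d. hs i \<noteq> 0" "pole_order n d hs = k" "0 < k"
    and zeros: "\<And>x y. on_curve f d x y \<Longrightarrow> eval_fun d hs x y = 0 \<Longrightarrow> x = 0 \<and> y = b"
  shows "[:0, 1:] ^ k dvd poly (fun_poly d hs) V"
proof -
  let ?U = "{u::'a. u ^ d = 1}"
  define M where "M = (\<Prod>u\<in>?U - {1}. fun_poly d hs \<circ>\<^sub>p [:0, [:u:]:])"
  have "x = 0" if "poly (curve_norm f d hs) x = 0" for x
  proof -
    obtain y where y: "y ^ d = poly f x"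
      using nth_root_exists[OF assms(1)] by blast
    then have "(\<Prod>u\<in>?U. eval_fun d hs x (u * y)) = 0"
      using that poly_curve_norm[OF assms(1,3) y] by (simp only:)
    then obtain u where "u \<in> ?U" "eval_fun d hs x (u * y) = 0"
      using prod_zero_iff[OF finite_roots_of_unity[OF assms(1)], of "\<lambda>u. eval_fun d hs x (u * y)"]
      by blast
    moreover from this have "on_curve f d x (u * y)"
      using y by (simp add: on_curve_def power_mult_distrib)
    ultimately show ?thesis
      using zeros by blast
  qed
  then have "[:0, 1:] ^ degree (curve_norm f d hs) dvd curve_norm f d hs"
    by (rule X_power_degree_dvd_if_roots_zero)
  then have "[:0, 1:] ^ k dvd curve_norm f d hs"
    using degree_curve_norm[OF assms(1-5,9)] assms(10,11) by simp
  moreover have "[:0, 1:] ^ k dvd poly (norm_poly d hs) V - curve_norm f d hs"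
    using assms(8) curve_norm_congruence[OF assms(1,3)] by (rule dvd_trans)
  ultimately have "[:0, 1:] ^ k dvd (poly (norm_poly d hs) V - curve_norm f d hs) + curve_norm f d hs"
    by (rule dvd_add[rotated])
  then have "[:0, 1:] ^ k dvd poly (fun_poly d hs) V * poly M V"
    by (simp add: norm_poly_eq_mult[OF assms(1)] M_def)
  moreover have "poly (poly M V) 0 \<noteq> 0"
  proof -
    have f0: "poly f 0 = b ^ d"
      using poly_0_eq_if_X_power_dvd_diff[OF assms(8,11)] assms(7) by simp
    have "eval_fun d hs 0 (u * b) \<noteq> 0" if "u \<in> ?U - {1}" for u
    proof
      assume "eval_fun d hs 0 (u * b) = 0"
      moreover have "on_curve f d 0 (u * b)"
        using that f0 by (simp add: on_curve_def power_mult_distrib)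
      ultimately have "u * b = b"
        using zeros by blast
      then show False
        using assms(6) that by simp
    qed
    moreover have "poly (poly M V) 0 = (\<Prod>u\<in>?U - {1}. eval_fun d hs 0 (u * b))"
      by (subst poly_poly_eq_poly_poly_const)
        (simp add: M_def assms(7) poly_prod poly_pcompose poly_fun_poly_const)
    ultimately show ?thesis
      using prod_zero_iff[OF finite_Diff[OF finite_roots_of_unity[OF assms(1)]],
          of "\<lambda>u. eval_fun d hs 0 (u * b)" "{1}"]
      by auto
  qed
  ultimately show ?thesis
    using linear_power_dvd_mult_cancel[where a = 0] by simp
qed

lemma point_has_orderI:
  fixes f V :: "'a::alg_closed_field poly"
  assumes "0 < d" "coprime n d" "\<not> CHAR('a) dvd d" "lead_coeff f = 1" "degree f = n"
    and "b \<noteq> 0" "poly V 0 = b" "[:0, 1:] ^ m dvd V ^ d - f" "0 < m"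
    and "multiple_principal f d m 0 b"
    and no_smaller: "\<And>hs k. \<exists>i<d. hs i \<noteq> 0 \<Longrightarrow> pole_order n d hs = k \<Longrightarrow> 0 < k \<Longrightarrow> k < m \<Longrightarrow>
        [:0, 1:] ^ k dvd poly (fun_poly d hs) V \<Longrightarrow> False"
  shows "point_has_order f d m 0 b"
  unfolding point_has_order_def
proof (intro conjI allI impI assms(9,10))
  show "on_curve f d 0 b"
    using poly_0_eq_if_X_power_dvd_diff[OF assms(8,9)] assms(7) by (simp add: on_curve_def)
  fix k assume k: "0 < k \<and> k < m"
  show "\<not> multiple_principal f d k 0 b"
  proof
    assume "multiple_principal f d k 0 b"
    then obtain hs where hs: "\<exists>i<d. hs i \<noteq> 0" "pole_order n d hs = k"
      and zeros: "\<And>x y. on_curve f d x y \<Longrightarrow> eval_fun d hs x y = 0 \<Longrightarrow> x = 0 \<and> y = b"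
      unfolding multiple_principal_def assms(5) by blast
    have "[:0, 1:] ^ k dvd V ^ d - f"
      using k le_imp_power_dvd[of k m] assms(8) dvd_trans by (metis less_imp_le)
    then have "[:0, 1:] ^ k dvd poly (fun_poly d hs) V"
      using X_power_dvd_poly_fun_poly[OF assms(1-7) _ hs _ zeros] k by blast
    then show False
      using no_smaller hs k by blast
  qed
qed

lemma eval_fun_two_terms:
  fixes hs :: "nat \<Rightarrow> 'a::field poly"
  assumes "2 \<le> d" "\<And>i. 2 \<le> i \<Longrightarrow> hs i = 0"
  shows "eval_fun d hs x y = poly (hs 0) x + poly (hs 1) x * y"
proof -
  have "eval_fun d hs x y = (\<Sum>i\<in>{0, 1}. poly (hs i) x * y ^ i)"
    unfolding eval_fun_def by (rule sum.mono_neutral_right) (use assms in auto)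
  then show ?thesis by simp
qed

lemma pole_order_two_terms:
  fixes hs :: "nat \<Rightarrow> 'a::field poly"
  assumes "2 \<le> d" "\<And>i. 2 \<le> i \<Longrightarrow> hs i = 0" "hs 0 \<noteq> 0" "hs 1 \<noteq> 0"
  shows "pole_order n d hs = max (d * degree (hs 0)) (d * degree (hs 1) + n)"
proof -
  have "{d * degree (hs i) + n * i | i. i < d \<and> hs i \<noteq> 0} = {d * degree (hs 0), d * degree (hs 1) + n}"
  proof (intro equalityI subsetI)
    fix w assume "w \<in> {d * degree (hs i) + n * i | i. i < d \<and> hs i \<noteq> 0}"
    then obtain i where "w = d * degree (hs i) + n * i" "hs i \<noteq> 0" by blast
    moreover from this have "i = 0 \<or> i = 1"
      using assms(2) by (metis One_nat_def less_2_cases not_less)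
    ultimately show "w \<in> {d * degree (hs 0), d * degree (hs 1) + n}" by auto
  next
    fix w assume "w \<in> {d * degree (hs 0), d * degree (hs 1) + n}"
    then have "w = d * degree (hs 0) + n * 0 \<and> 0 < d \<and> hs 0 \<noteq> 0
        \<or> w = d * degree (hs 1) + n * 1 \<and> 1 < d \<and> hs 1 \<noteq> 0"
      using assms(1,3,4) by auto
    then show "w \<in> {d * degree (hs i) + n * i | i. i < d \<and> hs i \<noteq> 0}"
      by blast
  qed
  then show ?thesis unfolding pole_order_def by (simp add: max_def)
qed

text \<open>The function \<open>v(x) - w(x) y\<close> realises \<open>m (Q) - m (O)\<close> for \<open>Q = (0, v(0)/w(0))\<close>: on the curve,
  its zeros satisfy \<open>c x\<^sup>m = v\<^sup>d - f w\<^sup>d = 0\<close>.\<close>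
lemma multiple_principal_two_terms:
  fixes f v w :: "'a::field poly"
  assumes "2 \<le> d" "v ^ d - f * w ^ d = smult c (monom 1 m)" "c \<noteq> 0" "v \<noteq> 0" "poly w 0 \<noteq> 0"
    and "max (d * degree v) (d * degree w + degree f) = m"
  shows "multiple_principal f d m 0 (poly v 0 / poly w 0)"
proof -
  define hs :: "nat \<Rightarrow> 'a poly" where "hs i = (if i = 0 then v else if i = 1 then - w else 0)" for i
  have hs2: "hs i = 0" if "2 \<le> i" for i
    using that by (simp add: hs_def)
  have "w \<noteq> 0" using assms(5) by auto
  then have "pole_order (degree f) d hs = m"
    using pole_order_two_terms[where hs = hs, OF assms(1) hs2] assms(4,6) by (simp add: hs_def)
  moreover have "x = 0 \<and> y = poly v 0 / poly w 0"
    if "on_curve f d x y" "eval_fun d hs x y = 0" for x y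
  proof -
    have v: "poly v x = poly w x * y"
      using that(2) eval_fun_two_terms[where hs = hs, OF assms(1) hs2] by (simp add: hs_def)
    have "c * x ^ m = poly v x ^ d - poly f x * poly w x ^ d"
      using arg_cong[OF assms(2), of "\<lambda>p. poly p x"] by (simp add: poly_monom)
    also have "\<dots> = 0"
      using that(1) v by (simp add: on_curve_def power_mult_distrib)
    finally have "x = 0"
      using assms(3) by simp
    then show ?thesis
      using v assms(5) by (simp add: field_simps)
  qed
  ultimately show ?thesis
    unfolding multiple_principal_def using assms(1,4) by (intro exI[of _ hs]) (auto simp: hs_def)
qed

lemma degree_lead_coeff_sum_monic:
  fixes g :: "'b \<Rightarrow> 'a::comm_ring_1 poly"
  assumes "\<And>i. i \<in> I \<Longrightarrow> degree (g i) = D" "\<And>i. i \<in> I \<Longrightarrow> lead_coeff (g i) = 1"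
    and "of_nat (card I) \<noteq> (0::'a)"
  shows "degree (sum g I) = D" and "lead_coeff (sum g I) = of_nat (card I)"
proof -
  have "coeff (sum g I) D = (\<Sum>i\<in>I. 1)"
    unfolding coeff_sum using assms(1,2) by (intro sum.cong) auto
  then have "coeff (sum g I) D = of_nat (card I)"
    by (cases "finite I") simp_all
  moreover have "degree (sum g I) \<le> D"
    using assms(1) by (cases "finite I") (simp_all add: degree_sum_le)
  ultimately show "degree (sum g I) = D"
    using assms(3) by (metis le_antisym le_degree)
  then show "lead_coeff (sum g I) = of_nat (card I)"
    using \<open>coeff (sum g I) D = of_nat (card I)\<close> by simp
qed

text \<open>\<open>(x\<^sup>l + r)\<^sup>d - x\<^sup>d\<^sup>l = r \<Sum>p<d. (x\<^sup>l + r)\<^sup>p x\<^sup>l\<^sup>(\<^sup>d\<^sup>-\<^sup>1\<^sup>-\<^sup>p\<^sup>)\<close>, and the sum has leading term \<open>d x\<^sup>l\<^sup>(\<^sup>d\<^sup>-\<^sup>1\<^sup>)\<close>.\<close>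
lemma degree_lead_coeff_binomial_curve:
  fixes r :: "'a::field poly"
  assumes "0 < d" "degree r < l" "of_nat d * lead_coeff r = 1"
  shows "degree ((monom 1 l + r) ^ d - monom 1 (d * l)) = degree r + l * (d - 1)"
    and "lead_coeff ((monom 1 l + r) ^ d - monom 1 (d * l)) = 1"
proof -
  define v where "v = monom 1 l + r"
  define X :: "'a poly" where "X = monom 1 l"
  define S where "S = (\<Sum>p<d. v ^ p * X ^ (d - 1 - p))"
  have "v ^ Suc (d - 1) - X ^ Suc (d - 1) = (v - X) * (\<Sum>p<Suc (d - 1). v ^ p * X ^ (d - 1 - p))"
    by (rule diff_power_eq_sum)
  then have factor: "v ^ d - monom 1 (d * l) = r * S"
    using assms(1) by (simp add: S_def v_def X_def monom_power mult.commute)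
  have v: "degree v = l" "lead_coeff v = 1"
    using assms(2) by (simp_all add: v_def degree_add_eq_left degree_monom_eq coeff_eq_0)
  have X: "degree X = l" "lead_coeff X = 1"
    by (simp_all add: X_def degree_monom_eq)
  have terms: "degree (v ^ p * X ^ (d - 1 - p)) = l * (d - 1)" "lead_coeff (v ^ p * X ^ (d - 1 - p)) = 1"
    if "p \<in> {..<d}" for p
  proof -
    have "p + (d - 1 - p) = d - 1"
      using that by simp
    then have "p * l + (d - 1 - p) * l = l * (d - 1)"
      by (metis add_mult_distrib mult.commute)
    moreover have "v \<noteq> 0" "X \<noteq> 0"
      using v(2) X(2) by auto
    ultimately show "degree (v ^ p * X ^ (d - 1 - p)) = l * (d - 1)"
      using v(1) X(1) by (simp add: degree_mult_eq degree_power_eq)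
    show "lead_coeff (v ^ p * X ^ (d - 1 - p)) = 1"
      using v X by (simp add: lead_coeff_mult lead_coeff_power)
  qed
  have card: "of_nat (card {..<d}) \<noteq> (0::'a)"
    using assms(3) by auto
  have S: "degree S = l * (d - 1)" "lead_coeff S = of_nat d"
    unfolding S_def using degree_lead_coeff_sum_monic[OF terms card] by simp_all
  have "r \<noteq> 0" "S \<noteq> 0"
    using assms(3) S(2) by auto
  then show "degree ((monom 1 l + r) ^ d - monom 1 (d * l)) = degree r + l * (d - 1)"
    "lead_coeff ((monom 1 l + r) ^ d - monom 1 (d * l)) = 1"
    unfolding v_def[symmetric] factor lead_coeff_mult
    using S assms(3) by (simp_all add: degree_mult_eq mult.commute)
qed

lemma degree_poly_fun_poly_less:
  fixes v :: "'a::field poly"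
  assumes "2 \<le> d" "degree v = l" "l < n" "0 < pole_order n d hs"
  shows "degree (poly (fun_poly d hs) v) < pole_order n d hs"
  unfolding poly_fun_poly
proof (rule degree_sum_less[OF _ assms(4)])
  fix i assume "i \<in> {..<d}"
  define k a where "k = pole_order n d hs" and "a = degree (hs i)"
  show "degree (hs i * v ^ i) < k"
  proof (cases "hs i = 0")
    case False
    moreover have "coeff (fun_poly d hs) i = hs i"
      using \<open>i \<in> {..<d}\<close> by (simp add: coeff_fun_poly)
    ultimately have weight: "d * a + n * i \<le> k"
      using weight_leD[OF weight_le_pole_order[of d n hs], of i] unfolding k_def a_def by simp
    have "d * (a + l * i) < d * k"
    proof (cases "i = 0")
      case True
      have "2 * a \<le> d * a"
        using assms(1) by (rule mult_le_mono1)
      moreover have "d * a \<le> k"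
        using weight True by simp
      ultimately have "a < k"
        using assms(4) unfolding k_def by linarith
      then show ?thesis
        using True assms(1) by simp
    next
      case False
      have "d * (l * i) < d * (n * i)" "(d - 1) * (n * i) \<le> (d - 1) * k"
        using False assms(1,3) weight by simp_all
      moreover have "d * (n * i) = n * i + (d - 1) * (n * i)" "d * k = k + (d - 1) * k"
        using assms(1) by (cases d; simp)+
      ultimately show ?thesis
        using weight unfolding add_mult_distrib2 by linarith
    qed
    then have "a + l * i < k" by simp
    moreover have "degree (hs i * v ^ i) \<le> a + l * i"
      using degree_mult_le[of "hs i" "v ^ i"] degree_power_le[of v i] assms(2) unfolding a_def
      by (simp add: mult.commute)
    ultimately show ?thesis by linarith
  qed (simp add: assms(4) k_def)
qed

lemma pole_order_ge_if_poly_fun_poly_eq_0: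
  fixes v :: "'a::field poly"
  assumes "0 < d" "coprime n d" "\<exists>i<d. hs i \<noteq> 0" "poly (fun_poly d hs) v = 0" "n < d * degree v"
  shows "d * degree v \<le> pole_order n d hs"
proof -
  obtain G where G: "fun_poly d hs = [:-v, 1:] * G"
    using assms(4) by (metis dvdE poly_eq_0_iff_dvd)
  have "weight_subst d n [:-v, 1:] = (- v) \<circ>\<^sub>p monom 1 d + monom 1 n"
    by (simp add: weight_subst_def map_poly_pCons pcompose_1)
  then have "degree (weight_subst d n [:-v, 1:]) = d * degree v"
    using assms(5) by (simp add: degree_add_eq_left degree_pcompose degree_monom_eq mult.commute)
  moreover have "weight_subst d n (fun_poly d hs) = weight_subst d n [:-v, 1:] * weight_subst d n G"
    unfolding G by (rule weight_subst_mult)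
  moreover note weight_subst_fun_poly[OF assms(1-3)]
  ultimately show ?thesis
    by (metis degree_mult_eq le_add1 mult_zero_left mult_zero_right)
qed

lemma eq_0_if_X_power_dvd_degree_less:
  fixes p :: "'a::idom poly"
  assumes "[:0, 1:] ^ k dvd p" "degree p < k"
  shows "p = 0"
  using dvd_imp_degree_le[OF assms(1)] assms(2) by (auto simp: degree_linear_power)

text \<open>On \<open>y\<^sup>d = (x\<^sup>l + r)\<^sup>d - x\<^sup>d\<^sup>l\<close> the function \<open>x\<^sup>l + r - y\<close> has divisor \<open>m (Q) - m (O)\<close> with
  \<open>m = d l\<close> and \<open>Q = (0, r(0))\<close>; a function of smaller pole order \<open>k\<close> evaluated at \<open>y = x\<^sup>l + r\<close> has
  degree less than \<open>k\<close>, so it cannot vanish to order \<open>k\<close> there without vanishing identically.\<close>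
lemma reachable_binomial_curve:
  fixes r :: "'a::alg_closed_field poly"
  assumes "2 \<le> d" "coprime n d" "\<not> CHAR('a) dvd d"
    and "degree r < l" "of_nat d * lead_coeff r = 1" "poly r 0 \<noteq> 0"
    and "n = degree r + l * (d - 1)" "l < n"
    and "rsquarefree ((monom 1 l + r) ^ d - monom 1 (d * l))"
  shows "reachable TYPE('a) n d (d * l)"
proof -
  define v where "v = monom 1 l + r"
  define f where "f = v ^ d - monom 1 (d * l)"
  have d: "0 < d" using assms(1) by simp
  have f: "degree f = n" "lead_coeff f = 1"
    using degree_lead_coeff_binomial_curve[OF d assms(4,5)] assms(7) by (simp_all add: f_def v_def)
  have v: "degree v = l" "poly v 0 = poly r 0"
    using assms(4) by (simp_all add: v_def degree_add_eq_left degree_monom_eq poly_monom zero_power)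
  have "n < l + l * (d - 1)"
    using assms(4,7) by simp
  also have "\<dots> = d * l"
    using d by (cases d) simp_all
  finally have nm: "n < d * l" .
  have "multiple_principal f d (d * l) 0 (poly v 0 / poly 1 0)"
    using assms(1,6) v nm f(1) by (intro multiple_principal_two_terms[where c = 1]) (auto simp: f_def)
  then have "point_has_order f d (d * l) 0 (poly r 0)"
  proof (intro point_has_orderI[where V = v] d assms(2,3,6) f)
    fix hs k
    assume hs: "\<exists>i<d. hs i \<noteq> 0" "pole_order n d hs = k" "0 < k" "k < d * l"
      and dvd: "[:0, 1:] ^ k dvd poly (fun_poly d hs) v"
    have "degree (poly (fun_poly d hs) v) < k"
      using degree_poly_fun_poly_less[OF assms(1) v(1) assms(8), of hs] hs(2,3) by simp
    with dvd have "poly (fun_poly d hs) v = 0"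
      by (rule eq_0_if_X_power_dvd_degree_less)
    then have "d * degree v \<le> pole_order n d hs"
      using nm v(1) by (intro pole_order_ge_if_poly_fun_poly_eq_0[OF d assms(2) hs(1)]) simp_all
    then have "d * l \<le> k"
      using hs(2) v(1) by simp
    then show False
      using hs(4) by simp
  qed (use v nm f d assms(2,4) in \<open>simp_all add: f_def monom_altdef\<close>)
  moreover have "1 < d * l"
    using nm assms(8) by simp
  moreover have "rsquarefree f"
    using assms(9) by (simp add: f_def v_def)
  ultimately show ?thesis
    unfolding reachable_def using f by blast
qed

lemma double_root_binomial_curve:
  fixes r :: "'a::field poly"
  assumes "0 < d" "0 < l" "poly r 0 \<noteq> 0" "of_nat d \<noteq> (0::'a)"
    and "poly ((monom 1 l + r) ^ d - monom 1 (d * l)) \<alpha> = 0"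
    and "poly (pderiv ((monom 1 l + r) ^ d - monom 1 (d * l))) \<alpha> = 0"
  shows "\<alpha> \<noteq> 0" and "\<alpha> * poly (pderiv r) \<alpha> = of_nat l * poly r \<alpha>"
    and "(poly r \<alpha> + \<alpha> ^ l) ^ d = (\<alpha> ^ l) ^ d"
proof -
  define A where "A = \<alpha> ^ l + poly r \<alpha>"
  have Ad: "A ^ d = (\<alpha> ^ l) ^ d"
    using assms(5) unfolding A_def by (simp add: poly_monom power_mult[symmetric] mult.commute)
  then show "(poly r \<alpha> + \<alpha> ^ l) ^ d = (\<alpha> ^ l) ^ d"
    unfolding A_def by (simp add: add.commute)
  show a0: "\<alpha> \<noteq> 0"
  proof
    assume "\<alpha> = 0"
    then have "poly r 0 ^ d = 0" using Ad assms(1,2) unfolding A_def by (simp add: zero_power)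
    then show False using assms(3) by simp
  qed
  have pow: "\<alpha> * \<alpha> ^ (l - 1) = \<alpha> ^ l" "A * A ^ (d - 1) = A ^ d"
      "\<alpha> * \<alpha> ^ (d * l - 1) = (\<alpha> ^ l) ^ d"
    using assms(1,2) by (simp_all add: power_Suc[symmetric] power_mult[symmetric] mult.commute)
  have "of_nat d * A ^ (d - 1) * (of_nat l * \<alpha> ^ (l - 1) + poly (pderiv r) \<alpha>)
      = of_nat (d * l) * \<alpha> ^ (d * l - 1)"
    using assms(6) unfolding A_def by (simp add: pderiv_diff pderiv_add pderiv_power pderiv_monom poly_monom)
  then have "(\<alpha> * A) * (of_nat d * A ^ (d - 1) * (of_nat l * \<alpha> ^ (l - 1) + poly (pderiv r) \<alpha>))
      = (\<alpha> * A) * (of_nat (d * l) * \<alpha> ^ (d * l - 1))"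
    by simp
  then have "of_nat d * (A * A ^ (d - 1)) * (of_nat l * (\<alpha> * \<alpha> ^ (l - 1)) + \<alpha> * poly (pderiv r) \<alpha>)
      = of_nat d * of_nat l * (\<alpha> * \<alpha> ^ (d * l - 1)) * A"
    by (simp add: algebra_simps)
  then have "of_nat d * A ^ d * (of_nat l * \<alpha> ^ l + \<alpha> * poly (pderiv r) \<alpha>)
      = of_nat d * (\<alpha> ^ l) ^ d * (of_nat l * A)"
    unfolding pow by (simp add: algebra_simps)
  then have "of_nat l * \<alpha> ^ l + \<alpha> * poly (pderiv r) \<alpha> = of_nat l * A"
    using Ad assms(4) a0 by simp
  then show "\<alpha> * poly (pderiv r) \<alpha> = of_nat l * poly r \<alpha>"
    unfolding A_def by (simp add: algebra_simps)
qed

lemma binomial_curve_nonzero: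
  fixes r :: "'a::field poly"
  assumes "0 < d" "degree r < l" "of_nat d * lead_coeff r = 1"
  shows "(monom 1 l + r) ^ d - monom 1 (d * l) \<noteq> 0"
  using degree_lead_coeff_binomial_curve(2)[OF assms] by auto

lemma exists_rsquarefree_binomial_curve_const:
  assumes "0 < d" "0 < l" "\<not> CHAR('a::alg_closed_field) dvd d" "of_nat l \<noteq> (0::'a)"
  shows "\<exists>r::'a poly. degree r = 0 \<and> of_nat d * lead_coeff r = 1 \<and> poly r 0 \<noteq> 0 \<and>
           rsquarefree ((monom 1 l + r) ^ d - monom 1 (d * l))"
proof -
  have dn: "of_nat d \<noteq> (0::'a)"
    using assms(3) by (simp add: of_nat_eq_0_iff_char_dvd)
  define r :: "'a poly" where "r = [:inverse (of_nat d):]"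
  have r: "degree r = 0" "of_nat d * lead_coeff r = 1" "poly r 0 \<noteq> 0"
    using dn by (simp_all add: r_def)
  have "rsquarefree ((monom 1 l + r) ^ d - monom 1 (d * l))"
  proof (rule rsquarefreeI_pderiv)
    show "(monom 1 l + r) ^ d - monom 1 (d * l) \<noteq> 0"
      using binomial_curve_nonzero[OF assms(1) _ r(2)] r(1) assms(2) by simp
    fix \<alpha> assume root: "poly ((monom 1 l + r) ^ d - monom 1 (d * l)) \<alpha> = 0"
    show "poly (pderiv ((monom 1 l + r) ^ d - monom 1 (d * l))) \<alpha> \<noteq> 0"
    proof
      assume "poly (pderiv ((monom 1 l + r) ^ d - monom 1 (d * l))) \<alpha> = 0"
      then have "\<alpha> * poly (pderiv r) \<alpha> = of_nat l * poly r \<alpha>"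
        using double_root_binomial_curve(2)[OF assms(1,2) r(3) dn root] by blast
      then show False
        using assms(4) dn by (simp add: r_def)
    qed
  qed
  with r show ?thesis by blast
qed

text \<open>For \<open>r = c + s x\<^sup>e\<close>, the two equations for a double root \<open>\<alpha>\<close> determine \<open>\<alpha>\<^sup>e\<close> and
  \<open>(x\<^sup>l + r)(\<alpha>) / \<alpha>\<^sup>l\<close> (a \<open>d\<close>-th root of unity \<open>u\<close>) in terms of \<open>c\<close>; eliminating \<open>\<alpha>\<close> leaves a
  nontrivial polynomial equation for \<open>c\<close>.\<close>
lemma binomial_curve_double_root_generic:
  fixes c s \<alpha> :: "'a::field" and e l :: nat
  defines "E \<equiv> of_nat e" and "L \<equiv> of_nat l"
  assumes "0 < d" "0 < e" "e < l" "s \<noteq> 0" "c \<noteq> 0" "of_nat d \<noteq> (0::'a)" "E \<noteq> L"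
    and root: "poly ((monom 1 l + ([:c:] + monom s e)) ^ d - monom 1 (d * l)) \<alpha> = 0"
    and root': "poly (pderiv ((monom 1 l + ([:c:] + monom s e)) ^ d - monom 1 (d * l))) \<alpha> = 0"
  shows "\<exists>u. u ^ d = 1 \<and> (u - 1) ^ e * (L * c / ((E - L) * s)) ^ l = (c * E / (E - L)) ^ e"
proof -
  define a B where "a = \<alpha> ^ e" and "B = \<alpha> ^ l"
  have "poly ([:c:] + monom s e) 0 \<noteq> 0"
    using assms(4,7) by (simp add: poly_monom zero_power)
  note double = double_root_binomial_curve[OF assms(3) _ this assms(8) root root']
  have "0 < l" using assms(5) by simp
  then have B: "B \<noteq> 0"
    using double(1) by (simp add: B_def)
  have "pderiv ([:c:] + monom s e) = monom (of_nat e * s) (e - 1)"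
    by (simp add: pderiv_add pderiv_monom pderiv_pCons)
  then have "\<alpha> * poly (pderiv ([:c:] + monom s e)) \<alpha> = E * s * a"
    using assms(4) by (simp add: E_def a_def poly_monom algebra_simps power_Suc[symmetric])
  then have "E * s * a = L * (c + s * a)"
    using double(2) \<open>0 < l\<close> by (simp add: L_def a_def poly_monom)
  then have a: "a = L * c / ((E - L) * s)" and ca: "c + s * a = c * E / (E - L)"
    using assms(6,9) by (simp_all add: field_simps right_diff_distrib' eq_diff_eq)
  define u where "u = (c + s * a + B) / B"
  have "(c + s * a + B) ^ d = B ^ d"
    using double(3) \<open>0 < l\<close> by (simp add: a_def B_def poly_monom)
  then have "u ^ d = 1"
    using B by (simp add: u_def power_divide)
  moreover have "(u - 1) * B = c + s * a"
    using B by (simp add: u_def field_simps)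
  moreover have "a ^ l = B ^ e"
    by (simp add: a_def B_def power_mult[symmetric] mult.commute)
  ultimately show ?thesis
    using a ca by (metis power_mult_distrib)
qed

lemma exists_rsquarefree_binomial_curve_pos:
  assumes "0 < d" "0 < e" "e < l" "\<not> CHAR('a::alg_closed_field) dvd d"
    and "of_nat e \<noteq> (0::'a)" "of_nat e \<noteq> (of_nat l :: 'a)"
  shows "\<exists>r::'a poly. degree r = e \<and> of_nat d * lead_coeff r = 1 \<and> poly r 0 \<noteq> 0 \<and>
           rsquarefree ((monom 1 l + r) ^ d - monom 1 (d * l))"
proof -
  define E L :: 'a where "E = of_nat e" and "L = of_nat l"
  define s :: 'a where "s = inverse (of_nat d)"
  have dn: "of_nat d \<noteq> (0::'a)"
    using assms(4) by (simp add: of_nat_eq_0_iff_char_dvd)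
  then have s: "s \<noteq> 0" "of_nat d * s = 1"
    by (simp_all add: s_def)
  define Q where "Q u = monom ((u - 1) ^ e * (L / ((E - L) * s)) ^ l) l - monom ((E / (E - L)) ^ e) e"
    for u :: 'a
  have "E \<noteq> 0" "E - L \<noteq> 0"
    using assms(5,6) by (simp_all add: E_def L_def)
  then have coeff_Q: "coeff (Q u) e \<noteq> 0" for u
    using assms(3) by (simp add: Q_def)
  have "Q u \<noteq> 0" for u
    using coeff_Q[of u] by (metis coeff_0)
  then have "finite ({0} \<union> (\<Union>u\<in>{u. u ^ d = 1}. {c. poly (Q u) c = 0}))"
    using finite_roots_of_unity[OF assms(1)] poly_roots_finite by blast
  then obtain c where c: "c \<noteq> 0" "\<And>u. u ^ d = 1 \<Longrightarrow> poly (Q u) c \<noteq> 0"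
    using ex_new_if_finite[OF infinite_UNIV_alg_closed] by blast
  define r where "r = [:c:] + monom s e"
  have r: "degree r = e" "of_nat d * lead_coeff r = 1" "poly r 0 \<noteq> 0"
    using assms(2) s c(1)
    by (simp_all add: r_def degree_add_eq_right degree_monom_eq poly_monom zero_power coeff_pCons
        split: nat.split)
  have "rsquarefree ((monom 1 l + r) ^ d - monom 1 (d * l))"
  proof (rule rsquarefreeI_pderiv)
    show "(monom 1 l + r) ^ d - monom 1 (d * l) \<noteq> 0"
      using binomial_curve_nonzero[OF assms(1) _ r(2)] r(1) assms(3) by simp
    fix \<alpha> assume root: "poly ((monom 1 l + r) ^ d - monom 1 (d * l)) \<alpha> = 0"
    show "poly (pderiv ((monom 1 l + r) ^ d - monom 1 (d * l))) \<alpha> \<noteq> 0"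
    proof
      assume "poly (pderiv ((monom 1 l + r) ^ d - monom 1 (d * l))) \<alpha> = 0"
      then obtain u where "u ^ d = 1"
        "(u - 1) ^ e * (L * c / ((E - L) * s)) ^ l = (c * E / (E - L)) ^ e"
        using binomial_curve_double_root_generic[OF assms(1-3) s(1) c(1) dn] assms(6) root
        unfolding r_def E_def L_def by blast
      moreover from this have "poly (Q u) c = 0"
        by (simp add: Q_def poly_monom power_mult_distrib power_divide algebra_simps)
      ultimately show False
        using c(2) by blast
    qed
  qed
  with r show ?thesis by blast
qed

text \<open>\<open>rho n s = (2x + s)(x - 1)\<^sup>n\<^sup>-\<^sup>1 - 2x\<^sup>n\<close> is chosen so that \<open>\<rho> (\<rho> + 2x\<^sup>n) = (2x + s)\<rho> (x - 1)\<^sup>n\<^sup>-\<^sup>1\<close>: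
  on \<open>y\<^sup>2 = f = p\<^sup>2 \<rho> (2x + s)\<close> the norm of \<open>p (x\<^sup>n + \<rho>) - (x - 1)\<^sup>(\<^sup>n\<^sup>-\<^sup>1\<^sup>)\<^sup>/\<^sup>2 y\<close> is \<open>p\<^sup>2 x\<^sup>2\<^sup>n\<close>.\<close>
definition rho :: "nat \<Rightarrow> 'a \<Rightarrow> 'a::comm_ring_1 poly" where
  "rho n s = [:s, 2:] * [:-1, 1:] ^ (n - 1) - smult 2 (monom 1 n)"

lemma rho_pencil: "rho n s = rho n 0 + smult s ([:-1, 1:] ^ (n - 1))"
proof -
  have "[:s, 2:] = [:s:] + [:0, 2:]" for s :: 'a by simp
  then show ?thesis
    unfolding rho_def by (simp add: algebra_simps)
qed

lemma coeff_rho: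
  assumes "1 \<le> n"
  shows "j \<ge> n \<Longrightarrow> coeff (rho n s) j = 0"
    and "coeff (rho n s) (n - 1) = coeff (rho n 0) (n - 1) + s"
proof -
  have B: "coeff ([:-1, 1:] ^ (n - 1) :: 'a poly) i = 0" if "n - 1 < i" for i
    using that coeff_eq_0 degree_linear_power by metis
  have "coeff ([:-1, 1:] ^ (n - 1) :: 'a poly) (n - 1) = 1"
    using coeff_linear_power[of "-1::'a" "n - 1"] by simp
  moreover have "coeff ([:s, 2:] * [:-1, 1:] ^ (n - 1)) j = s * coeff ([:-1, 1:] ^ (n - 1)) j
      + 2 * coeff ([:-1, 1:] ^ (n - 1)) (j - 1)" if "1 \<le> j" for j :: nat
    using that by (cases j) (simp_all add: coeff_pCons)
  ultimately show "j \<ge> n \<Longrightarrow> coeff (rho n s) j = 0"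
    using assms B by (cases "j = n") (auto simp: rho_def coeff_monom)
  show "coeff (rho n s) (n - 1) = coeff (rho n 0) (n - 1) + s"
    using \<open>coeff ([:-1, 1:] ^ (n - 1) :: 'a poly) (n - 1) = 1\<close>
    by (subst rho_pencil) simp
qed

lemma rho_identity: "[:s, 2:] * [:-1, 1:] ^ (n - 1) = rho n s + smult 2 (monom 1 n)"
  by (simp add: rho_def)

lemma poly_rho_1: "2 \<le> n \<Longrightarrow> poly (rho n s) 1 = - 2"
  by (simp add: rho_def poly_monom zero_power)

lemma degree_rho:
  assumes "1 \<le> n" "coeff (rho n s) (n - 1) \<noteq> 0"
  shows "degree (rho n s) = n - 1"
proof -
  have "degree (rho n s) \<le> n - 1"
  proof (rule degree_le, intro allI impI)
    fix i assume "n - 1 < i"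
    then have "n \<le> i"
      using assms(1) by linarith
    then show "coeff (rho n s) i = 0"
      by (rule coeff_rho(1)[OF assms(1)])
  qed
  then show ?thesis
    using assms(2) le_degree by (metis le_antisym)
qed

lemma hyperelliptic_pair_eq_0:
  fixes a0 a1 v :: "'a::field poly"
  assumes "a0 * [:-1, 1:] ^ \<delta> + a1 * v = 0" "a1 \<noteq> 0" "poly v 1 \<noteq> 0"
  shows "degree a1 + degree v = degree a0 + \<delta>" and "\<delta> \<le> degree a1"
proof -
  have v: "v \<noteq> 0" using assms(3) by auto
  have "a0 * [:-1, 1:] ^ \<delta> = - (a1 * v)"
    using assms(1) by (simp add: eq_neg_iff_add_eq_0)
  moreover have "a1 * v \<noteq> 0" using assms(2) v by simp
  ultimately have "a0 \<noteq> 0"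
    by auto
  show "degree a1 + degree v = degree a0 + \<delta>"
    using \<open>a0 * [:-1, 1:] ^ \<delta> = - (a1 * v)\<close> \<open>a0 \<noteq> 0\<close> assms(2) v
    by (metis degree_minus degree_mult_eq degree_linear_power power_not_zero pCons_eq_0_iff one_neq_zero)
  have "[:-1, 1:] ^ \<delta> dvd a1 * v"
    using \<open>a0 * [:-1, 1:] ^ \<delta> = - (a1 * v)\<close> by (metis dvd_minus_iff dvd_triv_right)
  then have "[:-1, 1:] ^ \<delta> dvd a1"
    using assms(3) by (rule linear_power_dvd_mult_cancel)
  then show "\<delta> \<le> degree a1"
    using dvd_imp_degree_le[OF _ assms(2)] by (fastforce simp: degree_linear_power)
qed

text \<open>Pole order exactly \<open>n\<close>: then \<open>a1\<close> is constant and \<open>a0 w + a1 p \<rho>\<close> has degree \<open>< n\<close> but vanishes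
  to order \<open>n\<close> at \<open>0\<close>; evaluating at \<open>x = 1\<close>, where \<open>w\<close> vanishes and \<open>\<rho>(1) = -2\<close>, gives the
  contradiction.\<close>
lemma hyperelliptic_pair_pole_order_n:
  fixes a0 a1 \<rho> :: "'a::field poly"
  assumes "[:0, 1:] ^ n dvd a0 * [:-1, 1:] ^ \<delta> + a1 * smult p (monom 1 n + \<rho>)"
    and "degree a1 = 0" "a1 \<noteq> 0" "p \<noteq> 0" "0 < \<delta>" "degree \<rho> < n" "poly \<rho> 1 \<noteq> 0"
    and "a0 \<noteq> 0 \<Longrightarrow> degree a0 + \<delta> < n"
  shows False
proof -
  define Q where "Q = a0 * [:-1, 1:] ^ \<delta> + a1 * smult p \<rho>"
  have "[:0, 1:] ^ n dvd a1 * smult p (monom 1 n)"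
    by (intro dvd_mult) (simp add: monom_altdef dvd_smult)
  moreover have "a0 * [:-1, 1:] ^ \<delta> + a1 * smult p (monom 1 n + \<rho>) = Q + a1 * smult p (monom 1 n)"
    by (simp add: Q_def algebra_simps smult_add_right)
  ultimately have "[:0, 1:] ^ n dvd Q"
    using assms(1) by (simp add: dvd_add_left_iff)
  moreover have "degree Q < n"
  proof -
    have "degree (a1 * smult p \<rho>) \<le> degree \<rho>"
      using assms(2) degree_mult_le[of a1 "smult p \<rho>"] degree_smult_le[of p \<rho>] by linarith
    then have "degree (a1 * smult p \<rho>) < n"
      using assms(6) by linarith
    moreover have "degree (a0 * [:-1, 1:] ^ \<delta>) < n"
      using assms(6,8) by (cases "a0 = 0") (auto simp: degree_mult_eq degree_linear_power)
    ultimately show ?thesis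
      unfolding Q_def by (simp add: degree_add_less)
  qed
  ultimately have "Q = 0"
    by (rule eq_0_if_X_power_dvd_degree_less)
  moreover have "poly Q 1 = poly a1 1 * p * poly \<rho> 1"
    using assms(5) by (simp add: Q_def zero_power)
  moreover have "poly a1 1 \<noteq> 0"
  proof -
    obtain c where "a1 = [:c:]"
      using assms(2) by (rule degree_eq_zeroE)
    then show ?thesis
      using assms(3) by simp
  qed
  ultimately show False
    using assms(4,7) by simp
qed

lemma hyperelliptic_no_small_pair:
  fixes a0 a1 \<rho> :: "'a::field poly"
  assumes "n = 2 * \<delta> + 1" "0 < \<delta>" "p \<noteq> 0" "degree \<rho> < n" "poly \<rho> 1 = - 2" "(2::'a) \<noteq> 0"
    and "a0 \<noteq> 0 \<or> a1 \<noteq> 0"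
    and weight0: "a0 \<noteq> 0 \<Longrightarrow> 2 * degree a0 \<le> k"
    and weight1: "a1 \<noteq> 0 \<Longrightarrow> 2 * degree a1 + n \<le> k"
    and "0 < k" "k < 2 * n"
    and dvd: "[:0, 1:] ^ k dvd a0 * [:-1, 1:] ^ \<delta> + a1 * smult p (monom 1 n + \<rho>)"
  shows False
proof -
  define w v :: "'a poly" where "w = [:-1, 1:] ^ \<delta>" and "v = smult p (monom 1 n + \<rho>)"
  have v1: "degree v = n" "poly v 1 \<noteq> 0"
    using assms(3-6) by (auto simp: v_def degree_add_eq_left degree_monom_eq poly_monom)
  then have v: "degree v = n" "poly v 1 \<noteq> 0" "v \<noteq> 0"
    by auto
  have w1: "degree w = \<delta>" "poly w 0 \<noteq> 0"
    by (simp_all add: w_def degree_linear_power)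
  then have w: "degree w = \<delta>" "poly w 0 \<noteq> 0" "w \<noteq> 0"
    by auto
  have P: "[:0, 1:] ^ k dvd a0 * w + a1 * v"
    using dvd by (simp add: w_def v_def)
  have deg_a0w: "degree (a0 * w) = degree a0 + \<delta>" if "a0 \<noteq> 0"
    using that w by (simp add: degree_mult_eq)
  have "n < k \<or> k = n" if "a1 \<noteq> 0"
    using weight1[OF that] by linarith
  then consider (a1) "a1 = 0" | (zero) "a1 \<noteq> 0" "a0 * w + a1 * v = 0"
    | (large) "a1 \<noteq> 0" "a0 * w + a1 * v \<noteq> 0" "n < k" | (n) "a1 \<noteq> 0" "k = n"
    by blast
  then show False
  proof cases
    case a1
    then have "a0 \<noteq> 0" "[:0, 1:] ^ k dvd a0 * w"
      using assms(7) P by simp_all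
    then have "[:0, 1:] ^ k dvd a0"
      using linear_power_dvd_mult_cancel[of 0 k a0 w] w(2) by simp
    moreover have "degree a0 < k"
      using weight0 \<open>a0 \<noteq> 0\<close> assms(10) by simp
    ultimately show False
      using eq_0_if_X_power_dvd_degree_less \<open>a0 \<noteq> 0\<close> by blast
  next
    case zero
    then have "a0 \<noteq> 0"
      using v(3) by auto
    moreover have "degree a1 + n = degree a0 + \<delta>" "\<delta> \<le> degree a1"
      using hyperelliptic_pair_eq_0[of a0 \<delta> a1 v] zero v(2) v(1) by (simp_all add: w_def)
    ultimately show False
      using weight0 assms(11) by simp
  next
    case large
    have "degree (a1 * v) < k"
      using large weight1 v by (simp add: degree_mult_eq)
    moreover have "degree (a0 * w) < k"
      using deg_a0w weight0 large(3) assms(1) by (cases "a0 = 0") auto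
    ultimately have "degree (a0 * w + a1 * v) < k"
      by (simp add: degree_add_less)
    then show False
      using eq_0_if_X_power_dvd_degree_less[OF P] large(2) by blast
  next
    case n
    have "degree a0 + \<delta> < n" if "a0 \<noteq> 0"
      using weight0[OF that] n(2) assms(1) by simp
    then show False
      using hyperelliptic_pair_pole_order_n[of n a0 \<delta> a1 p \<rho>] dvd n weight1 assms(2-6) by simp
  qed
qed

lemma hyperelliptic_identity:
  fixes p s :: "'a::comm_ring_1"
  assumes "n = 2 * \<delta> + 1"
  shows "(smult p (monom 1 n + rho n s)) ^ 2 - smult (p ^ 2) (rho n s * [:s, 2:]) * ([:-1, 1:] ^ \<delta>) ^ 2
    = smult (p ^ 2) (monom 1 (2 * n))"
proof -
  have "([:-1, 1:] ^ \<delta>) ^ 2 = ([:-1, 1:] ^ (n - 1) :: 'a poly)"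
    using assms by (simp add: power_mult[symmetric] mult.commute)
  then have "smult (p ^ 2) (rho n s * [:s, 2:]) * ([:-1, 1:] ^ \<delta>) ^ 2
      = smult (p ^ 2) (rho n s * ([:s, 2:] * [:-1, 1:] ^ (n - 1)))"
    by (simp only: mult_smult_left mult.assoc)
  also have "\<dots> = smult (p ^ 2) (rho n s * (rho n s + smult 2 (monom 1 n)))"
    by (simp only: rho_identity)
  finally have "smult (p ^ 2) (rho n s * [:s, 2:]) * ([:-1, 1:] ^ \<delta>) ^ 2
      = smult (p ^ 2) (rho n s * (rho n s + smult 2 (monom 1 n)))" .
  moreover have "monom (1::'a) (2 * n) = monom 1 n * monom 1 n"
    by (simp add: mult_monom mult_2)
  ultimately show ?thesis
    by (simp add: power2_eq_square algebra_simps smult_add_right numeral_poly)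
qed

text \<open>An inverse of \<open>(x - 1)\<^sup>\<delta>\<close> modulo \<open>x\<^sup>m\<close>, from \<open>(x - 1)(-\<Sum>j<m. x\<^sup>j) = 1 - x\<^sup>m\<close>.\<close>
lemma X_power_dvd_linear_power_inverse:
  assumes "0 < m"
  shows "[:0, 1:] ^ m dvd [:-1, 1:] ^ \<delta> * (- (\<Sum>j<m. [:0, 1:] ^ j)) ^ \<delta> - (1 :: 'a::comm_ring_1 poly)"
proof -
  define X :: "'a poly" where "X = [:0, 1:]"
  have "X ^ Suc (m - 1) - 1 ^ Suc (m - 1) = (X - 1) * (\<Sum>j<Suc (m - 1). X ^ j * 1 ^ (m - 1 - j))"
    by (rule diff_power_eq_sum)
  then have "X ^ m - 1 = (X - 1) * (\<Sum>j<m. X ^ j)"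
    using assms by simp
  moreover have "[:-1, 1:] = X - 1"
    by (simp add: X_def one_pCons)
  ultimately have "[:-1, 1:] * (- (\<Sum>j<m. X ^ j)) = 1 - X ^ m"
    by (metis minus_diff_eq mult_minus_right)
  then have "[:-1, 1:] ^ \<delta> * (- (\<Sum>j<m. X ^ j)) ^ \<delta> - 1 = (1 - X ^ m) ^ \<delta> - 1 ^ \<delta>"
    by (simp add: power_mult_distrib[symmetric])
  moreover have "(1 - X ^ m) - 1 dvd (1 - X ^ m) ^ \<delta> - 1 ^ \<delta>"
    by (rule dvd_power_diff)
  ultimately show ?thesis
    by (simp add: X_def)
qed

text \<open>The only root of \<open>2x + s\<close> is \<open>-s/2\<close>, where \<open>rho n s\<close> takes the value \<open>-2(-s/2)\<^sup>n \<noteq> 0\<close>.\<close>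
lemma rsquarefree_hyperelliptic:
  fixes s p :: "'a::field"
  assumes "(2::'a) \<noteq> 0" "s \<noteq> 0" "p \<noteq> 0" "rho n s \<noteq> 0"
    and rho_sqfree: "\<And>\<alpha>. poly (rho n s) \<alpha> = 0 \<Longrightarrow> poly (pderiv (rho n s)) \<alpha> \<noteq> 0"
  shows "rsquarefree (smult (p ^ 2) (rho n s * [:s, 2:]))"
proof (rule rsquarefreeI_pderiv)
  have "[:s, 2:] \<noteq> (0::'a poly)"
    using assms(1) by simp
  then show "smult (p ^ 2) (rho n s * [:s, 2:]) \<noteq> 0"
    using assms(3,4) by (simp only: smult_eq_0_iff mult_eq_0_iff) auto
  fix \<alpha> assume "poly (smult (p ^ 2) (rho n s * [:s, 2:])) \<alpha> = 0"
  moreover have "poly (smult (p ^ 2) (rho n s * [:s, 2:])) \<alpha> = p ^ 2 * (poly (rho n s) \<alpha> * (s + 2 * \<alpha>))"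
    by (simp add: algebra_simps)
  ultimately have root: "poly (rho n s) \<alpha> * (s + 2 * \<alpha>) = 0"
    using assms(3) by simp
  have "pderiv (smult (p ^ 2) (rho n s * [:s, 2:]))
      = smult (p ^ 2) (rho n s * pderiv [:s, 2:] + pderiv (rho n s) * [:s, 2:])"
    by (simp only: pderiv_smult pderiv_mult mult.commute[of "pderiv (rho n s)"])
  moreover have "pderiv [:s, 2:] = [:2:]"
    by (simp add: pderiv_pCons)
  ultimately have "pderiv (smult (p ^ 2) (rho n s * [:s, 2:]))
      = smult (p ^ 2) (rho n s * [:2:] + pderiv (rho n s) * [:s, 2:])"
    by simp
  then have "poly (pderiv (smult (p ^ 2) (rho n s * [:s, 2:]))) \<alpha>
      = p ^ 2 * (2 * poly (rho n s) \<alpha> + poly (pderiv (rho n s)) \<alpha> * (s + 2 * \<alpha>))"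
    by (simp add: algebra_simps)
  moreover have "poly (rho n s) \<alpha> \<noteq> 0 \<or> poly (pderiv (rho n s)) \<alpha> * (s + 2 * \<alpha>) \<noteq> 0"
  proof (cases "s + 2 * \<alpha> = 0")
    case True
    have "(s + 2 * \<alpha>) * poly ([:-1, 1:] ^ (n - 1)) \<alpha> = poly (rho n s) \<alpha> + 2 * \<alpha> ^ n"
      using arg_cong[OF rho_identity[of s n], of "\<lambda>q. poly q \<alpha>"] by (simp add: poly_monom algebra_simps)
    then have "poly (rho n s) \<alpha> + 2 * \<alpha> ^ n = 0"
      using True by (metis mult_zero_left)
    then have "poly (rho n s) \<alpha> = - 2 * \<alpha> ^ n"
      by (simp add: eq_neg_iff_add_eq_0)
    moreover have "\<alpha> \<noteq> 0"
      using True assms(2) by auto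
    ultimately show ?thesis
      using assms(1) by simp
  next
    case False
    then show ?thesis
      using root rho_sqfree by auto
  qed
  ultimately show "poly (pderiv (smult (p ^ 2) (rho n s * [:s, 2:]))) \<alpha> \<noteq> 0"
    using root assms(1-3) by auto
qed

lemma hyperelliptic_no_smaller_function:
  fixes hs :: "nat \<Rightarrow> 'a::field poly"
  assumes "n = 2 * \<delta> + 1" "0 < \<delta>" "p \<noteq> 0" "degree \<rho> < n" "poly \<rho> 1 = - 2" "(2::'a) \<noteq> 0"
    and inverse: "[:0, 1:] ^ (2 * n) dvd [:-1, 1:] ^ \<delta> * w' - 1"
    and "\<exists>i<2. hs i \<noteq> 0" "pole_order n 2 hs = k" "0 < k" "k < 2 * n"
    and dvd: "[:0, 1:] ^ k dvd poly (fun_poly 2 hs) (smult p (monom 1 n + \<rho>) * w')"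
  shows False
proof -
  define w v :: "'a poly" where "w = [:-1, 1:] ^ \<delta>" and "v = smult p (monom 1 n + \<rho>)"
  have "hs 0 * w + hs 1 * v = poly (fun_poly 2 hs) (v * w') * w - hs 1 * v * (w * w' - 1)"
    by (simp add: poly_fun_poly numeral_2_eq_2 algebra_simps)
  moreover have "[:0, 1:] ^ k dvd hs 1 * v * (w * w' - 1)"
    using le_imp_power_dvd[of k "2 * n"] assms(11) inverse dvd_trans
    by (metis dvd_mult less_imp_le w_def)
  ultimately have "[:0, 1:] ^ k dvd hs 0 * w + hs 1 * v"
    using dvd by (simp add: v_def dvd_diff dvd_mult2)
  moreover have "hs 0 \<noteq> 0 \<or> hs 1 \<noteq> 0"
    using assms(8) less_2_cases by (metis One_nat_def)
  moreover have weight: "2 * degree (hs i) + n * i \<le> k" if "i < 2" "hs i \<noteq> 0" for i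
    using weight_leD[OF weight_le_pole_order[of 2 n hs], of i] that assms(9)
    by (simp add: coeff_fun_poly)
  ultimately show False
    using hyperelliptic_no_small_pair[OF assms(1-6), of "hs 0" "hs 1" k] weight[of 0] weight[of 1]
      assms(10,11) by (simp add: w_def v_def)
qed

lemma reachable_hyperelliptic_curve:
  fixes s p :: "'a::alg_closed_field"
  assumes n: "n = 2 * \<delta> + 1" "3 \<le> n" and two: "(2::'a) \<noteq> 0" and s: "s \<noteq> 0"
    and lead: "coeff (rho n s) (n - 1) \<noteq> 0" "p ^ 2 * (2 * coeff (rho n s) (n - 1)) = 1"
    and rho_sqfree: "\<And>\<alpha>. poly (rho n s) \<alpha> = 0 \<Longrightarrow> poly (pderiv (rho n s)) \<alpha> \<noteq> 0"
  shows "reachable TYPE('a) n 2 (2 * n)"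
proof -
  define f where "f = smult (p ^ 2) (rho n s * [:s, 2:])"
  define v w w' :: "'a poly" where "v = smult p (monom 1 n + rho n s)" and "w = [:-1, 1:] ^ \<delta>"
    and "w' = (- (\<Sum>j<2 * n. [:0, 1:] ^ j)) ^ \<delta>"
  have p: "p \<noteq> 0" using lead(2) by auto
  have rho: "degree (rho n s) = n - 1" "rho n s \<noteq> 0" "poly (rho n s) 1 = - 2"
    using degree_rho[OF _ lead(1)] lead(1) poly_rho_1[of n s] n(2) by auto
  have sig: "[:s, 2:] \<noteq> 0" "degree [:s, 2:] = 1" "lead_coeff [:s, 2:] = 2"
    using two by simp_all
  have "degree (rho n s * [:s, 2:]) = n"
    using degree_mult_eq[OF rho(2) sig(1)] rho(1) sig(2) n(2) by (simp del: mult_pCons_right)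
  moreover have "lead_coeff (rho n s * [:s, 2:]) = 2 * coeff (rho n s) (n - 1)"
    using lead_coeff_mult[of "rho n s" "[:s, 2:]"] rho(1) sig(3) by (simp del: mult_pCons_right)
  ultimately have f: "degree f = n" "lead_coeff f = 1"
    using p lead(2) by (simp_all add: f_def del: mult_pCons_right)
  have inverse: "[:0, 1:] ^ (2 * n) dvd w * w' - 1"
    unfolding w_def w'_def using n(2) by (intro X_power_dvd_linear_power_inverse) simp
  then have w0: "poly w 0 * poly w' 0 = 1"
    using poly_0_eq_if_X_power_dvd_diff[OF inverse] n(2) by simp
  have ident: "v ^ 2 - f * w ^ 2 = smult (p ^ 2) (monom 1 (2 * n))"
    unfolding v_def f_def w_def by (rule hyperelliptic_identity[OF n(1)])
  have "(v * w') ^ 2 - f = (v ^ 2 - f * w ^ 2) * w' ^ 2 + f * ((w * w' - 1) * (w * w' + 1))"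
    by (simp add: power2_eq_square algebra_simps)
  then have V: "[:0, 1:] ^ (2 * n) dvd (v * w') ^ 2 - f"
    using inverse by (simp add: ident monom_altdef dvd_smult)
  have "poly v 0 = p * (s * (- 1) ^ (n - 1))"
    using n(2) by (simp add: v_def rho_def poly_monom zero_power)
  moreover have "inverse (poly w 0) = poly w' 0"
    using w0 by (rule inverse_unique)
  ultimately have b: "poly (v * w') 0 = poly v 0 / poly w 0" "poly v 0 / poly w 0 \<noteq> 0"
    using w0 p s by (auto simp: divide_inverse)
  have "degree v = n"
    using p rho(1) n(2) by (simp add: v_def degree_add_eq_left degree_monom_eq)
  then have "v \<noteq> 0" "max (2 * degree v) (2 * degree w + degree f) = 2 * n"
    using n f(1) by (auto simp: w_def degree_linear_power)
  moreover have "poly w 0 \<noteq> 0" "p ^ 2 \<noteq> 0"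
    using w0 p by auto
  ultimately have principal: "multiple_principal f 2 (2 * n) 0 (poly v 0 / poly w 0)"
    using multiple_principal_two_terms[OF _ ident] by simp
  have no_smaller: "False"
    if "\<exists>i<2. hs i \<noteq> 0" "pole_order n 2 hs = k" "0 < k" "k < 2 * n"
      "[:0, 1:] ^ k dvd poly (fun_poly 2 hs) (v * w')" for hs k
  proof (rule hyperelliptic_no_smaller_function[OF n(1) _ p _ rho(3) two _ that(1-4)])
    show "0 < \<delta>" "degree (rho n s) < n"
      using n rho(1) by simp_all
    show "[:0, 1:] ^ (2 * n) dvd [:-1, 1:] ^ \<delta> * w' - 1"
      using inverse by (simp add: w_def)
    show "[:0, 1:] ^ k dvd poly (fun_poly 2 hs) (smult p (monom 1 n + rho n s) * w')"
      using that(5) by (simp add: v_def)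
  qed
  have "coprime n 2" "\<not> CHAR('a) dvd 2" "0 < 2 * n"
    using n two of_nat_eq_0_iff_char_dvd[of 2, where 'a = 'a] by simp_all
  then have "point_has_order f 2 (2 * n) 0 (poly v 0 / poly w 0)"
    using point_has_orderI[OF _ _ _ f(2,1) b(2,1) V _ principal no_smaller] by simp
  moreover have "rsquarefree f"
    unfolding f_def using rsquarefree_hyperelliptic two s p rho(2) rho_sqfree by blast
  ultimately show ?thesis
    unfolding reachable_def using f n(2) by auto
qed

text \<open>If \<open>\<alpha>\<close> is a multiple root of \<open>A + s B\<close>, then \<open>s = -A(\<alpha>)/B(\<alpha>)\<close> and \<open>\<alpha>\<close> is a root of the
  Wronskian \<open>A' B - A B'\<close>.\<close>
lemma finite_pencil_multiple_roots:
  fixes A B :: "'a::field poly"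
  assumes coprime: "\<And>\<alpha>. poly B \<alpha> = 0 \<Longrightarrow> poly A \<alpha> \<noteq> 0"
    and wronskian: "pderiv A * B - A * pderiv B \<noteq> 0"
  shows "finite {s. \<exists>\<alpha>. poly (A + smult s B) \<alpha> = 0 \<and> poly (pderiv (A + smult s B)) \<alpha> = 0}"
proof -
  let ?W = "pderiv A * B - A * pderiv B"
  have "{s. \<exists>\<alpha>. poly (A + smult s B) \<alpha> = 0 \<and> poly (pderiv (A + smult s B)) \<alpha> = 0}
      \<subseteq> (\<lambda>\<alpha>. - poly A \<alpha> / poly B \<alpha>) ` {\<alpha>. poly ?W \<alpha> = 0}"
  proof safe
    fix s \<alpha> assume "poly (A + smult s B) \<alpha> = 0" "poly (pderiv (A + smult s B)) \<alpha> = 0"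
    then have root: "poly A \<alpha> = - s * poly B \<alpha>" "poly (pderiv A) \<alpha> = - s * poly (pderiv B) \<alpha>"
      by (simp_all add: pderiv_add pderiv_smult eq_neg_iff_add_eq_0)
    then have "poly B \<alpha> \<noteq> 0"
      using coprime by force
    then have "s = - poly A \<alpha> / poly B \<alpha>"
      using root(1) by (simp add: field_simps)
    moreover have "poly ?W \<alpha> = 0"
      using root by (simp add: algebra_simps)
    ultimately show "s \<in> (\<lambda>\<alpha>. - poly A \<alpha> / poly B \<alpha>) ` {\<alpha>. poly ?W \<alpha> = 0}"
      by blast
  qed
  moreover have "finite ((\<lambda>\<alpha>. - poly A \<alpha> / poly B \<alpha>) ` {\<alpha>. poly ?W \<alpha> = 0})"
    using poly_roots_finite[OF wronskian] by simp
  ultimately show ?thesis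
    using finite_subset by blast
qed

lemma exists_rho_parameter:
  assumes "3 \<le> n" "(2::'a::alg_closed_field) \<noteq> 0"
  shows "\<exists>s p :: 'a. s \<noteq> 0 \<and> coeff (rho n s) (n - 1) \<noteq> 0 \<and> p ^ 2 * (2 * coeff (rho n s) (n - 1)) = 1
    \<and> (\<forall>\<alpha>. poly (rho n s) \<alpha> = 0 \<longrightarrow> poly (pderiv (rho n s)) \<alpha> \<noteq> 0)"
proof -
  define A B :: "'a poly" where "A = rho n 0" and "B = [:-1, 1:] ^ (n - 1)"
  define bad where "bad = {s. \<exists>\<alpha>. poly (A + smult s B) \<alpha> = 0 \<and> poly (pderiv (A + smult s B)) \<alpha> = 0}"
  have "poly A \<alpha> \<noteq> 0" if "poly B \<alpha> = 0" for \<alpha>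
  proof -
    have "\<alpha> = 1"
      using that by (simp add: B_def)
    then show ?thesis
      using poly_rho_1[of n "0::'a"] assms by (simp add: A_def)
  qed
  moreover have "pderiv A * B - A * pderiv B \<noteq> 0"
  proof -
    have "poly (pderiv A) 0 = 2 * poly B 0" "poly A 0 = 0"
      using assms(1) by (simp_all add: A_def B_def rho_def pderiv_diff pderiv_mult pderiv_smult
          pderiv_monom pderiv_pCons poly_monom zero_power)
    then have "poly (pderiv A * B - A * pderiv B) 0 = 2 * poly B 0 * poly B 0"
      by simp
    moreover have "poly B 0 \<noteq> 0"
      by (simp add: B_def)
    ultimately show ?thesis
      using assms(2) by (metis mult_eq_0_iff poly_0)
  qed
  ultimately have bad: "finite bad"
    unfolding bad_def by (rule finite_pencil_multiple_roots)
  have sqfree: "poly (pderiv (A + smult s B)) \<alpha> \<noteq> 0"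
    if "s \<notin> bad" "poly (A + smult s B) \<alpha> = 0" for s \<alpha>
    using that unfolding bad_def by blast
  obtain s where s: "s \<notin> insert 0 (insert (- coeff A (n - 1)) bad)"
    using ex_new_if_finite[OF infinite_UNIV_alg_closed] bad by (metis finite_insert)
  have rho: "rho n s = A + smult s B"
    unfolding A_def B_def by (rule rho_pencil)
  have "coeff (rho n s) (n - 1) = coeff A (n - 1) + s"
    using coeff_rho(2)[of n s] assms(1) by (simp add: A_def)
  then have lead: "coeff (rho n s) (n - 1) \<noteq> 0"
    using s by (simp add: add_eq_0_iff)
  obtain p where p: "p ^ 2 = inverse (2 * coeff (rho n s) (n - 1))"
    using nth_root_exists[of 2 "inverse (2 * coeff (rho n s) (n - 1))"] by auto
  have "2 * coeff (rho n s) (n - 1) \<noteq> 0"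
    using lead assms(2) by simp
  then have "p ^ 2 * (2 * coeff (rho n s) (n - 1)) = 1"
    unfolding p by (rule left_inverse)
  moreover have "s \<noteq> 0" "s \<notin> bad"
    using s by simp_all
  moreover have "poly (pderiv (rho n s)) \<alpha> \<noteq> 0" if "poly (rho n s) \<alpha> = 0" for \<alpha>
    using sqfree[OF \<open>s \<notin> bad\<close>] that unfolding rho .
  ultimately show ?thesis
    using lead by blast
qed

lemma reachable_binomial_case:
  assumes "2 \<le> d" "coprime n d" "\<not> CHAR('a::alg_closed_field) dvd d"
    and "CHAR('a) = 0 \<or> n < CHAR('a)" "l < n" "n < d * l" "d * l \<le> n + l"
  shows "reachable TYPE('a) n d (d * l)"
proof -
  define e where "e = n + l - d * l"
  have "l * (d - 1) + l = d * l"
    using assms(1) by (cases d) (simp_all add: algebra_simps)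
  then have e: "e < l" "n = e + l * (d - 1)"
    using assms(6,7) by (simp_all add: e_def)
  have nonzero: "of_nat j \<noteq> (0::'a)" if "0 < j" "j \<le> n" for j
    using assms(4) that by (auto simp: of_nat_eq_0_iff_char_dvd dest: dvd_imp_le)
  have "\<exists>r::'a poly. degree r = e \<and> of_nat d * lead_coeff r = 1 \<and> poly r 0 \<noteq> 0 \<and>
      rsquarefree ((monom 1 l + r) ^ d - monom 1 (d * l))"
  proof (cases "e = 0")
    case True
    then show ?thesis
      using exists_rsquarefree_binomial_curve_const[OF _ _ assms(3) nonzero] assms(1,5) e by auto
  next
    case False
    have "0 < l - e" "l - e \<le> n"
      using e(1) assms(5) by simp_all
    then have "of_nat e \<noteq> (of_nat l :: 'a)"
      using nonzero[of "l - e"] e(1) by (simp add: of_nat_diff)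
    then show ?thesis
      using exists_rsquarefree_binomial_curve_pos[OF _ _ e(1) assms(3)] nonzero[of e] False e assms(1,5)
      by simp
  qed
  then show ?thesis
    using reachable_binomial_curve[OF assms(1-3)] e assms(5) by blast
qed

lemma reachable_hyperelliptic_case:
  assumes "coprime n (2::nat)" "2 < n" "(2::'a::alg_closed_field) \<noteq> 0"
  shows "reachable TYPE('a) n 2 (2 * n)"
proof -
  have "odd n"
    using assms(1) by simp
  then obtain \<delta> where \<delta>: "n = 2 * \<delta> + 1"
    by (rule oddE)
  obtain s p :: 'a where sp: "s \<noteq> 0" "coeff (rho n s) (n - 1) \<noteq> 0"
    "p ^ 2 * (2 * coeff (rho n s) (n - 1)) = 1"
    "\<And>\<alpha>. poly (rho n s) \<alpha> = 0 \<Longrightarrow> poly (pderiv (rho n s)) \<alpha> \<noteq> 0"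
    using exists_rho_parameter[of n] assms(2,3) by auto
  show ?thesis
    by (rule reachable_hyperelliptic_curve[OF \<delta> _ assms(3) sp]) (use assms(2) in simp)
qed

theorem mainTheorem3:
  fixes d n m :: nat
  assumes "1 < d" and "d < n" and "coprime n d"
    and "\<not> CHAR('a::alg_closed_field) dvd d"
    and "m > n" and "d dvd m"
    and "int n - int m + int (m div d) \<ge> 0"
    and "CHAR('a) = 0 \<or> CHAR('a) > n"
  shows "reachable TYPE('a) n d m"
proof -
  define l where "l = m div d"
  have m: "m = d * l" and le: "d * l \<le> n + l"
    using assms(6,7) by (simp_all add: l_def)
  have "2 * l \<le> d * l"
    using assms(1) by simp
  then have "l \<le> n"
    using le by linarith
  show ?thesis
  proof (cases "l < n")
    case True
    then show ?thesis
      using reachable_binomial_case[OF _ assms(3,4,8) True _ le] assms(1,5) m by simp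
  next
    case False
    then have "l = n"
      using \<open>l \<le> n\<close> by simp
    then have "d * n \<le> 2 * n"
      using le by (simp only: mult_2)
    then have "d \<le> 2"
      using assms(2) by simp
    then have "d = 2"
      using assms(1) by simp
    moreover have "(2::'a) \<noteq> 0"
      using assms(2,8) \<open>d = 2\<close> of_nat_eq_0_iff_char_dvd[of 2, where 'a = 'a] by (auto dest: dvd_imp_le)
    ultimately show ?thesis
      using reachable_hyperelliptic_case[of n] assms(2,3) m \<open>l = n\<close> by simp
  qed
qed

end
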